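(* There is an absolute constant $C$ such that for every Boolean function $f:\{0,1\}^n\times\{0,1\}^n\to\{0,1\}$, $$Q^{ent}(f)\ge \tfrac14\log_2\!\big(1/\gamma(f)\big)-C.$$
   Context: $Q^{ent}(f)$ is the minimal number of qubits communicated in an arbitrary (multi-round) two-party quantum protocol between Alice (holding $x$) and Bob (holding $y$) that computes $f(x,y)$ with error probability at most $1/3$ on every input, where the parties may share an arbitrary prior entangled state of unlimited size not counted in the cost. An assignment of real unit vectors $\alpha_x,\beta_y$ (any dimension) is a realization of $f$ with margin $\gamma>0$ if $\langle\alpha_x,\beta_y\rangle\ge\gamma$ whenever $f(x,y)=0$ and $\langle\alpha_x,\beta_y\rangle\le-\gamma$ whenever $f(x,y)=1$; $\gamma(f)$ denotes the supremum of margins over all realizations of $f$. *)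

theory Defs
  imports "HOL-Analysis.Analysis"
begin

text \<open>Quantum systems of N qubits: the state space is C^(2^N); basis index a < 2^N,
  qubit i corresponds to bit i of a. Operators are (2^N)x(2^N) complex matrices,
  represented as functions nat => nat => complex (entries with indices < 2^N are relevant).\<close>

definition apply_op :: "nat \<Rightarrow> (nat \<Rightarrow> nat \<Rightarrow> complex) \<Rightarrow> (nat \<Rightarrow> complex) \<Rightarrow> (nat \<Rightarrow> complex)" where
  "apply_op D M v = (\<lambda>a. \<Sum>b<D. M a b * v b)"

definition sqnorm :: "nat \<Rightarrow> (nat \<Rightarrow> complex) \<Rightarrow> real" where
  "sqnorm D v = (\<Sum>a<D. (cmod (v a))\<^sup>2)"

definition is_unitary :: "nat \<Rightarrow> (nat \<Rightarrow> nat \<Rightarrow> complex) \<Rightarrow> bool" where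
  "is_unitary D M \<longleftrightarrow>
     (\<forall>a<D. \<forall>c<D. (\<Sum>b<D. M a b * cnj (M c b)) = (if a = c then 1 else 0))"

definition is_projector :: "nat \<Rightarrow> (nat \<Rightarrow> nat \<Rightarrow> complex) \<Rightarrow> bool" where
  "is_projector D P \<longleftrightarrow>
     (\<forall>a<D. \<forall>b<D. P a b = cnj (P b a)) \<and>
     (\<forall>a<D. \<forall>c<D. (\<Sum>b<D. P a b * P b c) = P a c)"

text \<open>An operator on N qubits acting only on the qubits in S, i.e. of the form u \<otimes> Id.\<close>
definition local_op :: "nat \<Rightarrow> nat set \<Rightarrow> (nat \<Rightarrow> nat \<Rightarrow> complex) \<Rightarrow> bool" where
  "local_op N S M \<longleftrightarrow>
     (\<exists>u :: (nat \<Rightarrow> bool) \<Rightarrow> (nat \<Rightarrow> bool) \<Rightarrow> complex.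
        \<forall>a<2^N. \<forall>b<2^N. M a b =
          (if (\<forall>i<N. i \<notin> S \<longrightarrow> (bit a i \<longleftrightarrow> bit b i))
           then u (\<lambda>i. i \<in> S \<and> bit a i) (\<lambda>i. i \<in> S \<and> bit b i) else 0))"

text \<open>Alice's qubits after j rounds; s j = True means Alice speaks in round j,
  T j is the set of qubits sent in round j.\<close>
fun alice_qubits :: "nat set \<Rightarrow> (nat \<Rightarrow> bool) \<Rightarrow> (nat \<Rightarrow> nat set) \<Rightarrow> nat \<Rightarrow> nat set" where
  "alice_qubits A0 s T 0 = A0"
| "alice_qubits A0 s T (Suc j) =
     (if s j then alice_qubits A0 s T j - T j else alice_qubits A0 s T j \<union> T j)"

fun run_state :: "nat \<Rightarrow> (nat \<Rightarrow> complex) \<Rightarrow> (nat \<Rightarrow> nat \<Rightarrow> nat \<Rightarrow> complex) \<Rightarrow> nat \<Rightarrow> (nat \<Rightarrow> complex)" where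
  "run_state D \<psi> U 0 = \<psi>"
| "run_state D \<psi> U (Suc j) = apply_op D (U j) (run_state D \<psi> U j)"

text \<open>A k-round entanglement-assisted quantum protocol on N qubits computing f on X \<times> Y
  with error at most 1/3, communicating c qubits. \<psi>: arbitrary prior (entangled) state,
  A0: Alice's initial qubits (the rest are Bob's). In round j the speaker applies a unitary
  (depending on its own input) to its own qubits and then sends the qubits T j.
  At the end party p (True = Alice) performs a two-outcome projective measurement on its
  own qubits; outcome "projector" means output 1 (= True).\<close>
definition qprotocol ::
  "'a set \<Rightarrow> 'b set \<Rightarrow> ('a \<Rightarrow> 'b \<Rightarrow> bool) \<Rightarrow> nat \<Rightarrow> nat \<Rightarrow> (nat \<Rightarrow> complex) \<Rightarrow> nat set
   \<Rightarrow> (nat \<Rightarrow> bool) \<Rightarrow> (nat \<Rightarrow> nat set)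
   \<Rightarrow> (nat \<Rightarrow> 'a \<Rightarrow> nat \<Rightarrow> nat \<Rightarrow> complex) \<Rightarrow> (nat \<Rightarrow> 'b \<Rightarrow> nat \<Rightarrow> nat \<Rightarrow> complex)
   \<Rightarrow> bool \<Rightarrow> ('a \<Rightarrow> nat \<Rightarrow> nat \<Rightarrow> complex) \<Rightarrow> ('b \<Rightarrow> nat \<Rightarrow> nat \<Rightarrow> complex) \<Rightarrow> bool" where
  "qprotocol X Y f N k \<psi> A0 s T UA UB p PA PB \<longleftrightarrow>
     (let D = 2^N; Al = alice_qubits A0 s T in
       A0 \<subseteq> {..<N} \<and> sqnorm D \<psi> = 1 \<and>
       (\<forall>j<k. if s j
          then T j \<subseteq> Al j \<and> (\<forall>x\<in>X. is_unitary D (UA j x) \<and> local_op N (Al j) (UA j x))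
          else T j \<subseteq> {..<N} - Al j \<and>
               (\<forall>y\<in>Y. is_unitary D (UB j y) \<and> local_op N ({..<N} - Al j) (UB j y))) \<and>
       (if p then (\<forall>x\<in>X. is_projector D (PA x) \<and> local_op N (Al k) (PA x))
        else (\<forall>y\<in>Y. is_projector D (PB y) \<and> local_op N ({..<N} - Al k) (PB y))) \<and>
       (\<forall>x\<in>X. \<forall>y\<in>Y.
          (let v = run_state D \<psi> (\<lambda>j. if s j then UA j x else UB j y) k;
               pr = sqnorm D (apply_op D (if p then PA x else PB y) v)
           in (f x y \<longrightarrow> pr \<ge> 2/3) \<and> (\<not> f x y \<longrightarrow> pr \<le> 1/3))))"

definition qprotocol_cost :: "nat \<Rightarrow> (nat \<Rightarrow> nat set) \<Rightarrow> nat" where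
  "qprotocol_cost k T = (\<Sum>j<k. card (T j))"

definition Qent :: "'a set \<Rightarrow> 'b set \<Rightarrow> ('a \<Rightarrow> 'b \<Rightarrow> bool) \<Rightarrow> nat" where
  "Qent X Y f = (LEAST c. \<exists>N k \<psi> A0 s T UA UB p PA PB.
      qprotocol X Y f N k \<psi> A0 s T UA UB p PA PB \<and> qprotocol_cost k T = c)"

text \<open>Realization of f with margin g by real unit vectors in R^d (f x y = True means value 1).\<close>
definition realizes_with_margin :: "'a set \<Rightarrow> 'b set \<Rightarrow> ('a \<Rightarrow> 'b \<Rightarrow> bool) \<Rightarrow> real \<Rightarrow> bool" where
  "realizes_with_margin X Y f g \<longleftrightarrow> g > 0 \<and>
     (\<exists>(d::nat) (\<alpha>::'a \<Rightarrow> nat \<Rightarrow> real) (\<beta>::'b \<Rightarrow> nat \<Rightarrow> real).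
        (\<forall>x\<in>X. (\<Sum>i<d. (\<alpha> x i)\<^sup>2) = 1) \<and> (\<forall>y\<in>Y. (\<Sum>i<d. (\<beta> y i)\<^sup>2) = 1) \<and>
        (\<forall>x\<in>X. \<forall>y\<in>Y.
           (\<not> f x y \<longrightarrow> (\<Sum>i<d. \<alpha> x i * \<beta> y i) \<ge> g) \<and>
           (f x y \<longrightarrow> (\<Sum>i<d. \<alpha> x i * \<beta> y i) \<le> - g)))"

definition margin_gamma :: "'a set \<Rightarrow> 'b set \<Rightarrow> ('a \<Rightarrow> 'b \<Rightarrow> bool) \<Rightarrow> real" where
  "margin_gamma X Y f = Sup {g. realizes_with_margin X Y f g}"

end

(*
  Throughout the protocol the joint state is a sum over at most 4^c "transcripts" t of terms
  X_t Y_t \<Psi>, where the contractions X_t depend only on x and act on Alice's qubits and the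
  Y_t depend only on y and act on Bob's qubits: whenever qubits T change hands, the sender's
  operator is split along the 2^|T| * 2^|T| pairs (sigma, tau) of basis states of T into an
  operator on the other qubits times |sigma><tau| on T.  Hence the acceptance probability is the
  real part of the sum over t, t' of <Y_t'* Y_t \<Psi>, X_t* X_t' \<Psi>>, an inner product of a
  vector depending only on y with one depending only on x, both of squared norm at most 16^c.
  Subtracting it from 1/2 and normalising turns the gap between 2/3 and 1/3 into a realization
  with margin 1/(6 * 16^c + 3), so log (1 / gamma f) <= 4 c + 4.
*)

theory Submission
  imports Defs
begin

type_synonym qvec = "nat set \<Rightarrow> complex"
type_synonym qop = "nat set \<Rightarrow> nat set \<Rightarrow> complex"

text \<open>A vector on the qubits W assigns an amplitude to each A \<subseteq> W, the basis state in which
  exactly the qubits in A are 1; an operator is its matrix.  Values outside Pow W are ignored.\<close>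

definition qapply :: "nat set \<Rightarrow> qop \<Rightarrow> qvec \<Rightarrow> qvec" where
  "qapply W K V = (\<lambda>A. if A \<subseteq> W then \<Sum>B\<in>Pow W. K A B * V B else 0)"

definition qcomp :: "nat set \<Rightarrow> qop \<Rightarrow> qop \<Rightarrow> qop" where
  "qcomp W K L = (\<lambda>A C. \<Sum>B\<in>Pow W. K A B * L B C)"

definition qadj :: "qop \<Rightarrow> qop" where
  "qadj K = (\<lambda>A B. cnj (K B A))"

definition qid :: qop where
  "qid = (\<lambda>A B. if A = B then 1 else 0)"

definition qinner :: "nat set \<Rightarrow> qvec \<Rightarrow> qvec \<Rightarrow> complex" where
  "qinner W U V = (\<Sum>A\<in>Pow W. cnj (U A) * V A)"

definition qnorm2 :: "nat set \<Rightarrow> qvec \<Rightarrow> real" where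
  "qnorm2 W V = (\<Sum>A\<in>Pow W. (cmod (V A))\<^sup>2)"

definition contraction :: "nat set \<Rightarrow> qop \<Rightarrow> bool" where
  "contraction W K \<longleftrightarrow> (\<forall>V. qnorm2 W (qapply W K V) \<le> qnorm2 W V)"

definition acts_on :: "nat set \<Rightarrow> nat set \<Rightarrow> qop \<Rightarrow> bool" where
  "acts_on W S K \<longleftrightarrow> (\<exists>u. \<forall>A B. A \<subseteq> W \<longrightarrow> B \<subseteq> W \<longrightarrow>
     K A B = (if A - S = B - S then u (A \<inter> S) (B \<inter> S) else 0))"

text \<open>For \<sigma>, \<tau> \<subseteq> T, ketbra T \<sigma> \<tau> is the operator |\<sigma>\<rangle>\<langle>\<tau>| on the qubits T (identity on the
  others), and partial_entry T \<sigma> \<tau> K is the partial matrix entry \<langle>\<sigma>|K|\<tau>\<rangle> on T, an operator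
  on the other qubits, extended by the identity on T.\<close>

definition ketbra :: "nat set \<Rightarrow> nat set \<Rightarrow> nat set \<Rightarrow> qop" where
  "ketbra T \<sigma> \<tau> = (\<lambda>A B. if A - T = B - T \<and> A \<inter> T = \<sigma> \<and> B \<inter> T = \<tau> then 1 else 0)"

definition partial_entry :: "nat set \<Rightarrow> nat set \<Rightarrow> nat set \<Rightarrow> qop \<Rightarrow> qop" where
  "partial_entry T \<sigma> \<tau> K = (\<lambda>A B. if A \<inter> T = B \<inter> T then K ((A - T) \<union> \<sigma>) ((B - T) \<union> \<tau>) else 0)"

lemma sum_Pow_split:
  assumes "finite W" "T \<subseteq> W"
  shows "(\<Sum>B\<in>Pow W. g B) = (\<Sum>\<tau>\<in>Pow T. \<Sum>B\<in>Pow (W - T). g (B \<union> \<tau>))"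
proof -
  have "bij_betw (\<lambda>(B, \<tau>). B \<union> \<tau>) (Pow (W - T) \<times> Pow T) (Pow W)"
    using assms(2) by (intro bij_betwI[where g = "\<lambda>B. (B - T, B \<inter> T)"]) auto
  then have "(\<Sum>B\<in>Pow W. g B) = (\<Sum>(B, \<tau>)\<in>Pow (W - T) \<times> Pow T. g (B \<union> \<tau>))"
    by (simp add: sum.reindex_bij_betw[symmetric] case_prod_unfold)
  also have "\<dots> = (\<Sum>\<tau>\<in>Pow T. \<Sum>B\<in>Pow (W - T). g (B \<union> \<tau>))"
    by (simp add: sum.cartesian_product[symmetric] sum.swap[of _ "Pow (W - T)"])
  finally show ?thesis .
qed

lemma sum_Pow_slice:
  assumes "finite W" "T \<subseteq> W" "\<sigma> \<subseteq> T"
  shows "(\<Sum>B\<in>Pow W. if B \<inter> T = \<sigma> then g (B - T) B else 0) = (\<Sum>B\<in>Pow (W - T). g B (B \<union> \<sigma>))"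
proof -
  have "(\<Sum>B\<in>Pow W. if B \<inter> T = \<sigma> then g (B - T) B else 0)
      = (\<Sum>\<tau>\<in>Pow T. \<Sum>B\<in>Pow (W - T). if \<tau> = \<sigma> then g B (B \<union> \<tau>) else 0)"
  proof -
    have "(B \<union> \<tau>) \<inter> T = \<tau>" "(B \<union> \<tau>) - T = B" if "\<tau> \<subseteq> T" "B \<subseteq> W - T" for \<tau> B
      using that by auto
    then show ?thesis unfolding sum_Pow_split[OF assms(1,2)] by (intro sum.cong refl) simp_all
  qed
  also have "\<dots> = (\<Sum>\<tau>\<in>Pow T. if \<tau> = \<sigma> then \<Sum>B\<in>Pow (W - T). g B (B \<union> \<tau>) else 0)"
    by (intro sum.cong) auto
  also have "\<dots> = (\<Sum>B\<in>Pow (W - T). g B (B \<union> \<sigma>))"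
    using assms by (simp add: finite_subset)
  finally show ?thesis .
qed

lemma sum_Pow_slice_le:
  fixes g :: "nat set \<Rightarrow> real"
  assumes "finite W" "T \<subseteq> W" "\<sigma> \<subseteq> T" "\<And>B. g B \<ge> 0"
  shows "(\<Sum>B\<in>Pow (W - T). g (B \<union> \<sigma>)) \<le> (\<Sum>B\<in>Pow W. g B)"
  unfolding sum_Pow_split[OF assms(1,2)]
  using assms by (intro member_le_sum[where f = "\<lambda>\<tau>. \<Sum>B\<in>Pow (W - T). g (B \<union> \<tau>)"])
    (auto intro: sum_nonneg finite_subset)

lemma qapply_outside [simp]: "\<not> A \<subseteq> W \<Longrightarrow> qapply W K V A = 0"
  by (simp add: qapply_def)

lemma qapply_cong:
  "(\<And>A B. A \<subseteq> W \<Longrightarrow> B \<subseteq> W \<Longrightarrow> K A B = K' A B) \<Longrightarrow> (\<And>B. B \<subseteq> W \<Longrightarrow> V B = V' B)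
    \<Longrightarrow> qapply W K V = qapply W K' V'"
  by (auto simp: qapply_def intro!: ext sum.cong)

lemma qapply_qcomp:
  assumes "finite W"
  shows "qapply W (qcomp W K L) V = qapply W K (qapply W L V)"
proof
  fix A
  have "(\<Sum>C\<in>Pow W. (\<Sum>B\<in>Pow W. K A B * L B C) * V C) = (\<Sum>C\<in>Pow W. \<Sum>B\<in>Pow W. K A B * L B C * V C)"
    by (simp add: sum_distrib_right)
  also have "\<dots> = (\<Sum>B\<in>Pow W. \<Sum>C\<in>Pow W. K A B * L B C * V C)"
    by (rule sum.swap)
  also have "\<dots> = (\<Sum>B\<in>Pow W. K A B * (\<Sum>C\<in>Pow W. L B C * V C))"
    by (simp add: sum_distrib_left mult.assoc)
  finally show "qapply W (qcomp W K L) V A = qapply W K (qapply W L V) A"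
    by (auto simp: qapply_def qcomp_def intro: sum.cong)
qed

lemma qapply_qid: "finite W \<Longrightarrow> A \<subseteq> W \<Longrightarrow> qapply W qid V A = V A"
  by (simp add: qapply_def qid_def if_distrib[of "\<lambda>c. c * _"] cong: if_cong)

lemma qapply_sum: "qapply W K (\<lambda>B. \<Sum>i\<in>I. V i B) = (\<lambda>A. \<Sum>i\<in>I. qapply W K (V i) A)"
proof
  fix A
  show "qapply W K (\<lambda>B. \<Sum>i\<in>I. V i B) A = (\<Sum>i\<in>I. qapply W K (V i) A)"
    unfolding qapply_def by (simp add: sum_distrib_left sum.swap[of _ "Pow W"])
qed

lemma qapply_sum_left: "qapply W (\<lambda>A B. \<Sum>i\<in>I. K i A B) V = (\<lambda>A. \<Sum>i\<in>I. qapply W (K i) V A)"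
proof
  fix A
  show "qapply W (\<lambda>A B. \<Sum>i\<in>I. K i A B) V A = (\<Sum>i\<in>I. qapply W (K i) V A)"
    unfolding qapply_def by (simp add: sum_distrib_right sum.swap[of _ I])
qed

lemma qnorm2_nonneg: "qnorm2 W V \<ge> 0"
  by (simp add: qnorm2_def sum_nonneg)

lemma qnorm2_eq_Re_qinner: "qnorm2 W V = Re (qinner W V V)"
  by (simp add: qnorm2_def qinner_def Re_sum mult.commute[of "cnj _"]
      complex_norm_square[symmetric])

lemma qinner_qapply_qadj:
  assumes "finite W"
  shows "qinner W (qapply W K U) V = qinner W U (qapply W (qadj K) V)"
proof -
  have "qinner W (qapply W K U) V = (\<Sum>A\<in>Pow W. \<Sum>B\<in>Pow W. cnj (K A B) * cnj (U B) * V A)"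
    by (auto simp: qinner_def qapply_def sum_distrib_right intro!: sum.cong)
  also have "\<dots> = (\<Sum>B\<in>Pow W. cnj (U B) * (\<Sum>A\<in>Pow W. qadj K B A * V A))"
    by (subst sum.swap) (simp add: sum_distrib_left qadj_def mult_ac)
  also have "\<dots> = qinner W U (qapply W (qadj K) V)"
    by (auto simp: qinner_def qapply_def intro!: sum.cong)
  finally show ?thesis .
qed

lemma qinner_Cauchy_Schwarz: "(cmod (qinner W U V))\<^sup>2 \<le> qnorm2 W U * qnorm2 W V"
proof -
  have "cmod (qinner W U V) \<le> (\<Sum>A\<in>Pow W. cmod (U A) * cmod (V A))"
    unfolding qinner_def by (rule order.trans[OF norm_sum]) (simp add: norm_mult)
  then have "(cmod (qinner W U V))\<^sup>2 \<le> (\<Sum>A\<in>Pow W. cmod (U A) * cmod (V A))\<^sup>2"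
    by (simp add: power_mono)
  also have "\<dots> \<le> qnorm2 W U * qnorm2 W V"
    unfolding qnorm2_def by (rule Cauchy_Schwarz_ineq_sum)
  finally show ?thesis .
qed

lemma qnorm2_le_by_Cauchy_Schwarz:
  assumes "qnorm2 W U = Re (qinner W V U')" "qnorm2 W U' \<le> qnorm2 W U"
  shows "qnorm2 W U \<le> qnorm2 W V"
proof -
  let ?n = "qnorm2 W U"
  have "?n \<le> cmod (qinner W V U')" using assms(1) complex_Re_le_cmod by simp
  then have "?n\<^sup>2 \<le> (cmod (qinner W V U'))\<^sup>2" using qnorm2_nonneg power_mono by blast
  also have "\<dots> \<le> qnorm2 W V * ?n"
    using qinner_Cauchy_Schwarz order.trans mult_left_mono[OF assms(2) qnorm2_nonneg] by blast
  finally have "?n * ?n \<le> qnorm2 W V * ?n" by (simp add: power2_eq_square)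
  then show ?thesis using qnorm2_nonneg[of W U] qnorm2_nonneg[of W V]
    by (cases "?n = 0") auto
qed

lemma qadj_qadj [simp]: "qadj (qadj K) = K"
  by (simp add: qadj_def)

lemma contraction_qid:
  assumes "finite W"
  shows "contraction W qid"
proof -
  have "qnorm2 W (qapply W qid V) = qnorm2 W V" for V
    unfolding qnorm2_def using assms by (intro sum.cong) (simp_all add: qapply_qid)
  then show ?thesis by (simp add: contraction_def)
qed

lemma contraction_qcomp:
  "finite W \<Longrightarrow> contraction W K \<Longrightarrow> contraction W L \<Longrightarrow> contraction W (qcomp W K L)"
  unfolding contraction_def by (simp add: qapply_qcomp) (meson order.trans)

lemma contraction_qadj:
  assumes "finite W" "contraction W K"
  shows "contraction W (qadj K)"
  unfolding contraction_def
proof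
  fix V
  have "qnorm2 W (qapply W (qadj K) V) = Re (qinner W V (qapply W K (qapply W (qadj K) V)))"
    using qinner_qapply_qadj[OF assms(1), of "qadj K" V] by (simp add: qnorm2_eq_Re_qinner)
  moreover have "qnorm2 W (qapply W K (qapply W (qadj K) V)) \<le> qnorm2 W (qapply W (qadj K) V)"
    using assms(2) by (simp add: contraction_def)
  ultimately show "qnorm2 W (qapply W (qadj K) V) \<le> qnorm2 W V"
    by (rule qnorm2_le_by_Cauchy_Schwarz)
qed

text \<open>Since K (qadj K) = 1, the adjoint qadj K is an isometry, so K = qadj (qadj K) is a
  contraction.\<close>
lemma contraction_if_unitary:
  assumes fin: "finite W"
    and unitary: "\<And>A B. A \<subseteq> W \<Longrightarrow> B \<subseteq> W \<Longrightarrow> (\<Sum>C\<in>Pow W. K A C * cnj (K B C)) = (if A = B then 1 else 0)"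
  shows "contraction W K"
proof -
  have "qapply W (qcomp W K (qadj K)) V = qapply W qid V" for V
    by (rule qapply_cong) (auto simp: qcomp_def qadj_def qid_def unitary)
  then have "qapply W K (qapply W (qadj K) V) A = V A" if "A \<subseteq> W" for V A
    using that by (simp add: qapply_qcomp[OF fin, symmetric] qapply_qid[OF fin])
  then have "qnorm2 W (qapply W (qadj K) V) = qnorm2 W V" for V
    using qinner_qapply_qadj[OF fin, of "qadj K" V]
    by (simp add: qnorm2_eq_Re_qinner qinner_def)
  then have "contraction W (qadj K)" by (simp add: contraction_def)
  from contraction_qadj[OF fin this] show ?thesis by simp
qed

lemma contraction_if_projector:
  assumes fin: "finite W"
    and hermitian: "\<And>A B. A \<subseteq> W \<Longrightarrow> B \<subseteq> W \<Longrightarrow> K A B = cnj (K B A)"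
    and idempotent: "\<And>A C. A \<subseteq> W \<Longrightarrow> C \<subseteq> W \<Longrightarrow> (\<Sum>B\<in>Pow W. K A B * K B C) = K A C"
  shows "contraction W K"
  unfolding contraction_def
proof
  fix V
  have "qapply W (qadj K) (qapply W K V) = qapply W (qcomp W K K) V"
    by (simp add: qapply_qcomp[OF fin]) (rule qapply_cong, auto simp: qadj_def hermitian[symmetric])
  also have "\<dots> = qapply W K V"
    by (rule qapply_cong) (auto simp: qcomp_def idempotent)
  finally have "qnorm2 W (qapply W K V) = Re (qinner W V (qapply W K V))"
    using qinner_qapply_qadj[OF fin, of K V "qapply W K V"] by (simp add: qnorm2_eq_Re_qinner)
  from qnorm2_le_by_Cauchy_Schwarz[OF this order.refl]
  show "qnorm2 W (qapply W K V) \<le> qnorm2 W V" .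
qed

lemma acts_onI:
  "(\<And>A B. A \<subseteq> W \<Longrightarrow> B \<subseteq> W \<Longrightarrow> K A B = (if A - S = B - S then u (A \<inter> S) (B \<inter> S) else 0))
    \<Longrightarrow> acts_on W S K"
  unfolding acts_on_def by blast

lemma acts_onE:
  assumes "acts_on W S K"
  obtains u where "\<And>A B. A \<subseteq> W \<Longrightarrow> B \<subseteq> W \<Longrightarrow>
    K A B = (if A - S = B - S then u (A \<inter> S) (B \<inter> S) else 0)"
proof -
  from assms obtain u where "\<forall>A B. A \<subseteq> W \<longrightarrow> B \<subseteq> W \<longrightarrow>
      K A B = (if A - S = B - S then u (A \<inter> S) (B \<inter> S) else 0)"
    unfolding acts_on_def by blast
  then show thesis using that by blast
qed

lemma acts_on_mono:
  assumes "S \<subseteq> S'" "acts_on W S K"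
  shows "acts_on W S' K"
proof -
  obtain u where u: "\<And>A B. A \<subseteq> W \<Longrightarrow> B \<subseteq> W \<Longrightarrow>
      K A B = (if A - S = B - S then u (A \<inter> S) (B \<inter> S) else 0)"
    using acts_onE[OF assms(2)] by blast
  show ?thesis
  proof (rule acts_onI[where u = "\<lambda>\<alpha> \<beta>. if \<alpha> - S = \<beta> - S then u (\<alpha> \<inter> S) (\<beta> \<inter> S) else 0"])
    fix A B assume "A \<subseteq> W" "B \<subseteq> W"
    moreover have "A - S = B - S \<longleftrightarrow> A - S' = B - S' \<and> A \<inter> S' - S = B \<inter> S' - S"
      "A \<inter> S' \<inter> S = A \<inter> S" "B \<inter> S' \<inter> S = B \<inter> S"
      using assms(1) by blast+
    ultimately show "K A B = (if A - S' = B - S' then (if A \<inter> S' - S = B \<inter> S' - S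
        then u (A \<inter> S' \<inter> S) (B \<inter> S' \<inter> S) else 0) else 0)"
      using u by auto
  qed
qed

lemma acts_on_qadj: "acts_on W S K \<Longrightarrow> acts_on W S (qadj K)"
  unfolding acts_on_def qadj_def
  by (elim exE, rule exI[of _ "\<lambda>\<alpha> \<beta>. cnj (u \<beta> \<alpha>)" for u]) auto

lemma acts_on_qid: "acts_on W S qid"
  unfolding acts_on_def qid_def
proof (intro exI[of _ "\<lambda>\<alpha> \<beta>. if \<alpha> = \<beta> then 1 else 0"] allI impI)
  fix A B :: "nat set"
  have e: "(A = B) = (A - S = B - S \<and> A \<inter> S = B \<inter> S)" by blast
  show "(if A = B then 1 else 0)
      = (if A - S = B - S then if A \<inter> S = B \<inter> S then 1 else 0 else (0::complex))"
    by (simp only: e) simp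
qed

lemma acts_on_ketbra: "acts_on W T (ketbra T \<sigma> \<tau>)"
  unfolding acts_on_def ketbra_def
  by (rule exI[of _ "\<lambda>\<alpha> \<beta>. if \<alpha> = \<sigma> \<and> \<beta> = \<tau> then 1 else 0"]) auto

lemma acts_on_partial_entry:
  assumes ST: "S \<inter> T = {}" "T \<subseteq> W" "\<sigma> \<subseteq> T" "\<tau> \<subseteq> T" and K: "acts_on W (S \<union> T) K"
  shows "acts_on W S (partial_entry T \<sigma> \<tau> K)"
proof -
  obtain u where u: "\<And>A B. A \<subseteq> W \<Longrightarrow> B \<subseteq> W \<Longrightarrow>
      K A B = (if A - (S \<union> T) = B - (S \<union> T) then u (A \<inter> (S \<union> T)) (B \<inter> (S \<union> T)) else 0)"
    using acts_onE[OF K] by blast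
  show ?thesis
  proof (rule acts_onI[where u = "\<lambda>\<alpha> \<beta>. u (\<alpha> \<union> \<sigma>) (\<beta> \<union> \<tau>)"])
    fix A B assume AB: "A \<subseteq> W" "B \<subseteq> W"
    have sub: "A - T \<union> \<sigma> \<subseteq> W" "B - T \<union> \<tau> \<subseteq> W"
      and "(A - T \<union> \<sigma>) - (S \<union> T) = A - (S \<union> T)" "(B - T \<union> \<tau>) - (S \<union> T) = B - (S \<union> T)"
      and "(A - T \<union> \<sigma>) \<inter> (S \<union> T) = A \<inter> S \<union> \<sigma>" "(B - T \<union> \<tau>) \<inter> (S \<union> T) = B \<inter> S \<union> \<tau>"
      using AB ST by auto
    then have "partial_entry T \<sigma> \<tau> K A B = (if A \<inter> T = B \<inter> T then
        (if A - (S \<union> T) = B - (S \<union> T) then u (A \<inter> S \<union> \<sigma>) (B \<inter> S \<union> \<tau>) else 0) else 0)"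
      using u[OF sub] by (simp add: partial_entry_def)
    also have "\<dots> = (if A - S = B - S then u (A \<inter> S \<union> \<sigma>) (B \<inter> S \<union> \<tau>) else 0)"
    proof -
      have "A \<inter> T = B \<inter> T \<and> A - (S \<union> T) = B - (S \<union> T) \<longleftrightarrow> A - S = B - S"
        using ST by blast
      then show ?thesis by auto
    qed
    finally show "partial_entry T \<sigma> \<tau> K A B
        = (if A - S = B - S then u (A \<inter> S \<union> \<sigma>) (B \<inter> S \<union> \<tau>) else 0)" .
  qed
qed

lemma acts_on_qcomp:
  assumes fin: "finite W" and S: "S \<subseteq> W" and K: "acts_on W S K" and L: "acts_on W S L"
  shows "acts_on W S (qcomp W K L)"
proof -
  obtain u where u: "\<And>A B. A \<subseteq> W \<Longrightarrow> B \<subseteq> W \<Longrightarrow>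
      K A B = (if A - S = B - S then u (A \<inter> S) (B \<inter> S) else 0)"
    using acts_onE[OF K] by blast
  obtain w where w: "\<And>A B. A \<subseteq> W \<Longrightarrow> B \<subseteq> W \<Longrightarrow>
      L A B = (if A - S = B - S then w (A \<inter> S) (B \<inter> S) else 0)"
    using acts_onE[OF L] by blast
  show ?thesis
  proof (rule acts_onI[where u = "\<lambda>\<alpha> \<gamma>. \<Sum>\<beta>\<in>Pow S. u \<alpha> \<beta> * w \<beta> \<gamma>"])
    fix A C assume AC: "A \<subseteq> W" "C \<subseteq> W"
    have "qcomp W K L A C = (\<Sum>\<beta>\<in>Pow S. \<Sum>B\<in>Pow (W - S). K A (B \<union> \<beta>) * L (B \<union> \<beta>) C)"
      unfolding qcomp_def by (rule sum_Pow_split[OF fin S])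
    also have "\<dots> = (\<Sum>\<beta>\<in>Pow S. \<Sum>B\<in>Pow (W - S). if A - S = B then
        (if A - S = C - S then u (A \<inter> S) \<beta> * w \<beta> (C \<inter> S) else 0) else 0)"
    proof (intro sum.cong refl)
      fix \<beta> B assume "\<beta> \<in> Pow S" "B \<in> Pow (W - S)"
      then have "(B \<union> \<beta>) - S = B" "(B \<union> \<beta>) \<inter> S = \<beta>" "B \<union> \<beta> \<subseteq> W" using S by auto
      then show "K A (B \<union> \<beta>) * L (B \<union> \<beta>) C = (if A - S = B then
          (if A - S = C - S then u (A \<inter> S) \<beta> * w \<beta> (C \<inter> S) else 0) else 0)"
        using u[OF AC(1)] w[OF _ AC(2)] by auto
    qed
    also have "\<dots> = (if A - S = C - S then \<Sum>\<beta>\<in>Pow S. u (A \<inter> S) \<beta> * w \<beta> (C \<inter> S) else 0)"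
    proof -
      have "A - S \<subseteq> W - S" "C - S \<subseteq> W - S" using AC by auto
      then show ?thesis using fin by simp
    qed
    finally show "qcomp W K L A C
        = (if A - S = C - S then \<Sum>\<beta>\<in>Pow S. u (A \<inter> S) \<beta> * w \<beta> (C \<inter> S) else 0)" .
  qed
qed

lemma qcomp_single_term:
  assumes "finite W" "M \<subseteq> W" "\<And>B. B \<subseteq> W \<Longrightarrow> B \<noteq> M \<Longrightarrow> K A B * L B C = 0"
  shows "qcomp W K L A C = K A M * L M C"
proof -
  have "qcomp W K L A C = (\<Sum>B\<in>{M}. K A B * L B C)"
    unfolding qcomp_def using assms by (intro sum.mono_neutral_right) auto
  then show ?thesis by simp
qed

text \<open>Only one intermediate basis state contributes to the entry (A, C) of K L or L K: the one
  that agrees with C on S and with A elsewhere, resp. the other way round.  Both entries equal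
  u (A \<inter> S) (C \<inter> S) * w (A - S) (C - S).\<close>
lemma qapply_commute:
  assumes fin: "finite W" and K: "acts_on W S K" and L: "acts_on W (W - S) L"
  shows "qapply W K (qapply W L V) = qapply W L (qapply W K V)"
proof -
  obtain u where u: "\<And>A B. A \<subseteq> W \<Longrightarrow> B \<subseteq> W \<Longrightarrow>
      K A B = (if A - S = B - S then u (A \<inter> S) (B \<inter> S) else 0)"
    using acts_onE[OF K] by blast
  obtain w where w0: "\<And>A B. A \<subseteq> W \<Longrightarrow> B \<subseteq> W \<Longrightarrow>
      L A B = (if A - (W - S) = B - (W - S) then w (A \<inter> (W - S)) (B \<inter> (W - S)) else 0)"
    using acts_onE[OF L] by blast
  have w: "L A B = (if A \<inter> S = B \<inter> S then w (A - S) (B - S) else 0)" if "A \<subseteq> W" "B \<subseteq> W" for A B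
  proof -
    have "A - (W - S) = A \<inter> S" "B - (W - S) = B \<inter> S" "A \<inter> (W - S) = A - S" "B \<inter> (W - S) = B - S"
      using that by auto
    then show ?thesis using w0[OF that] by simp
  qed
  have "qcomp W K L A C = qcomp W L K A C" if AC: "A \<subseteq> W" "C \<subseteq> W" for A C
  proof -
    let ?M = "(A - S) \<union> (C \<inter> S)" and ?M' = "(A \<inter> S) \<union> (C - S)"
    have M: "?M \<subseteq> W" "?M - S = A - S" "?M \<inter> S = C \<inter> S"
      and M': "?M' \<subseteq> W" "?M' - S = C - S" "?M' \<inter> S = A \<inter> S"
      using AC by auto
    have "qcomp W K L A C = K A ?M * L ?M C"
      using AC u w by (intro qcomp_single_term[OF fin]) auto
    also have "\<dots> = u (A \<inter> S) (C \<inter> S) * w (A - S) (C - S)"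
      using u[OF AC(1) M(1)] w[OF M(1) AC(2)] M by simp
    also have "\<dots> = L A ?M' * K ?M' C"
      using u[OF M'(1) AC(2)] w[OF AC(1) M'(1)] M' by simp
    also have "\<dots> = qcomp W L K A C"
      using AC u w by (intro qcomp_single_term[OF fin, symmetric]) auto
    finally show ?thesis .
  qed
  then have "qapply W (qcomp W K L) V = qapply W (qcomp W L K) V"
    by (intro qapply_cong) auto
  then show ?thesis by (simp add: qapply_qcomp[OF fin])
qed

lemma qapply_ketbra:
  assumes fW: "finite W" and TW: "T \<subseteq> W" and t: "\<tau> \<subseteq> T"
  shows "qapply W (ketbra T \<sigma> \<tau>) V M = (if M \<subseteq> W \<and> M \<inter> T = \<sigma> then V ((M - T) \<union> \<tau>) else 0)"
proof (cases "M \<subseteq> W")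
  case True
  have "qapply W (ketbra T \<sigma> \<tau>) V M
      = (\<Sum>B\<in>Pow W. if B = (M - T) \<union> \<tau> then (if M \<inter> T = \<sigma> then V B else 0) else 0)"
    unfolding qapply_def ketbra_def using True t
    by (auto intro!: sum.cong)
  also have "\<dots> = (if M \<inter> T = \<sigma> then V ((M - T) \<union> \<tau>) else 0)"
    using fW True t TW by auto
  finally show ?thesis using True by simp
qed simp

lemma qnorm2_qapply_ketbra:
  assumes "finite W" "T \<subseteq> W" "\<sigma> \<subseteq> T" "\<tau> \<subseteq> T"
  shows "qnorm2 W (qapply W (ketbra T \<sigma> \<tau>) V) = (\<Sum>B\<in>Pow (W - T). (cmod (V (B \<union> \<tau>)))\<^sup>2)"
proof -
  have "qnorm2 W (qapply W (ketbra T \<sigma> \<tau>) V)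
      = (\<Sum>B\<in>Pow W. if B \<inter> T = \<sigma> then (cmod (V ((B - T) \<union> \<tau>)))\<^sup>2 else 0)"
    unfolding qnorm2_def using assms by (intro sum.cong refl) (auto simp: qapply_ketbra)
  also have "\<dots> = (\<Sum>B\<in>Pow (W - T). (cmod (V (B \<union> \<tau>)))\<^sup>2)"
    by (rule sum_Pow_slice[OF assms(1-3), where g = "\<lambda>B _. (cmod (V (B \<union> \<tau>)))\<^sup>2"])
  finally show ?thesis .
qed

lemma contraction_ketbra:
  assumes "finite W" "T \<subseteq> W" "\<sigma> \<subseteq> T" "\<tau> \<subseteq> T"
  shows "contraction W (ketbra T \<sigma> \<tau>)"
  unfolding contraction_def
proof
  fix V
  have "qnorm2 W (qapply W (ketbra T \<sigma> \<tau>) V) = (\<Sum>B\<in>Pow (W - T). (cmod (V (B \<union> \<tau>)))\<^sup>2)"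
    by (rule qnorm2_qapply_ketbra[OF assms])
  also have "\<dots> \<le> qnorm2 W V"
    unfolding qnorm2_def by (rule sum_Pow_slice_le[OF assms(1,2,4)]) simp
  finally show "qnorm2 W (qapply W (ketbra T \<sigma> \<tau>) V) \<le> qnorm2 W V" .
qed

lemma qcomp_partial_entry_ketbra:
  assumes "finite W" "T \<subseteq> W" "\<sigma> \<subseteq> T" "A \<subseteq> W" "B \<subseteq> W"
  shows "qcomp W (partial_entry T \<sigma> \<tau> K) (ketbra T \<sigma> \<tau>) A B
    = (if A \<inter> T = \<sigma> \<and> B \<inter> T = \<tau> then K A B else 0)"
proof -
  let ?M = "(B - T) \<union> \<sigma>"
  have "M - T = B - T \<and> M \<inter> T = \<sigma> \<longleftrightarrow> M = ?M" for M
    using assms(3) by blast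
  then have "qcomp W (partial_entry T \<sigma> \<tau> K) (ketbra T \<sigma> \<tau>) A B
      = (\<Sum>M\<in>Pow W. if M = ?M then partial_entry T \<sigma> \<tau> K A ?M * (if B \<inter> T = \<tau> then 1 else 0) else 0)"
    unfolding qcomp_def ketbra_def by (intro sum.cong refl) auto
  also have "\<dots> = partial_entry T \<sigma> \<tau> K A ?M * (if B \<inter> T = \<tau> then 1 else 0)"
    using assms by auto
  also have "\<dots> = (if A \<inter> T = \<sigma> \<and> B \<inter> T = \<tau> then K A B else 0)"
  proof -
    have "A \<inter> T = \<sigma> \<Longrightarrow> (A - T) \<union> \<sigma> = A" "B \<inter> T = \<tau> \<Longrightarrow> (B - T) \<union> \<tau> = B"
      "?M \<inter> T = \<sigma>" "?M - T = B - T"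
      using assms(3) by blast+
    then show ?thesis by (auto simp: partial_entry_def)
  qed
  finally show ?thesis .
qed

lemma qapply_eq_sum_partial_entry_ketbra:
  assumes "finite W" "T \<subseteq> W"
  shows "qapply W K V = (\<lambda>A. \<Sum>(\<sigma>, \<tau>)\<in>Pow T \<times> Pow T.
    qapply W (partial_entry T \<sigma> \<tau> K) (qapply W (ketbra T \<sigma> \<tau>) V) A)"
proof
  fix A
  have fin: "finite (Pow T \<times> Pow T)" using assms finite_subset by blast
  have "qapply W K V A = qapply W (\<lambda>A B. \<Sum>(\<sigma>, \<tau>)\<in>Pow T \<times> Pow T.
      qcomp W (partial_entry T \<sigma> \<tau> K) (ketbra T \<sigma> \<tau>) A B) V A"
  proof (rule fun_cong[OF qapply_cong])
    fix A B assume AB: "A \<subseteq> W" "B \<subseteq> W"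
    have "(\<Sum>(\<sigma>, \<tau>)\<in>Pow T \<times> Pow T. qcomp W (partial_entry T \<sigma> \<tau> K) (ketbra T \<sigma> \<tau>) A B)
        = (\<Sum>p\<in>Pow T \<times> Pow T. if (A \<inter> T, B \<inter> T) = p then K A B else 0)"
      using assms AB by (intro sum.cong refl) (clarsimp simp: qcomp_partial_entry_ketbra)
    then show "K A B = (\<Sum>(\<sigma>, \<tau>)\<in>Pow T \<times> Pow T. qcomp W (partial_entry T \<sigma> \<tau> K) (ketbra T \<sigma> \<tau>) A B)"
      using fin by simp
  qed simp
  also have "\<dots> = (\<Sum>(\<sigma>, \<tau>)\<in>Pow T \<times> Pow T.
      qapply W (partial_entry T \<sigma> \<tau> K) (qapply W (ketbra T \<sigma> \<tau>) V) A)"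
    by (simp add: qapply_sum_left case_prod_unfold qapply_qcomp[OF assms(1)])
  finally show "qapply W K V A = (\<Sum>(\<sigma>, \<tau>)\<in>Pow T \<times> Pow T.
      qapply W (partial_entry T \<sigma> \<tau> K) (qapply W (ketbra T \<sigma> \<tau>) V) A)" .
qed

lemma qapply_partial_entry:
  assumes fin: "finite W" and T: "T \<subseteq> W" "\<sigma> \<subseteq> T" "\<tau> \<subseteq> T" "\<rho> \<subseteq> T" and A: "A \<subseteq> W - T"
  shows "qapply W (partial_entry T \<sigma> \<tau> K) V (A \<union> \<rho>)
    = qapply W K (qapply W (ketbra T \<tau> \<rho>) V) (A \<union> \<sigma>)"
proof -
  have A': "A \<union> \<rho> \<subseteq> W" "A \<union> \<sigma> \<subseteq> W" "(A \<union> \<rho>) \<inter> T = \<rho>" "(A \<union> \<rho>) - T = A"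
    using A T by auto
  have "qapply W (partial_entry T \<sigma> \<tau> K) V (A \<union> \<rho>)
      = (\<Sum>B\<in>Pow W. if B \<inter> T = \<rho> then K (A \<union> \<sigma>) ((B - T) \<union> \<tau>) * V B else 0)"
    using A' by (auto simp: qapply_def partial_entry_def intro!: sum.cong)
  also have "\<dots> = (\<Sum>B\<in>Pow (W - T). K (A \<union> \<sigma>) (B \<union> \<tau>) * V (B \<union> \<rho>))"
    by (rule sum_Pow_slice[OF fin T(1,4), where g = "\<lambda>B B'. K (A \<union> \<sigma>) (B \<union> \<tau>) * V B'"])
  also have "\<dots> = (\<Sum>B\<in>Pow W. if B \<inter> T = \<tau> then K (A \<union> \<sigma>) B * V ((B - T) \<union> \<rho>) else 0)"
    by (rule sum_Pow_slice[OF fin T(1,3), where g = "\<lambda>B B'. K (A \<union> \<sigma>) B' * V (B \<union> \<rho>)", symmetric])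
  also have "\<dots> = qapply W K (qapply W (ketbra T \<tau> \<rho>) V) (A \<union> \<sigma>)"
    unfolding qapply_def[of W K] using A'(2) fin T by (auto simp: qapply_ketbra intro!: sum.cong)
  finally show ?thesis .
qed

text \<open>The rows of the partial entry are those of K applied to the slices of the input vector
  along the basis states of T, and these slices partition its squared norm.\<close>
lemma contraction_partial_entry:
  assumes fin: "finite W" and T: "T \<subseteq> W" "\<sigma> \<subseteq> T" "\<tau> \<subseteq> T" and K: "contraction W K"
  shows "contraction W (partial_entry T \<sigma> \<tau> K)"
  unfolding contraction_def
proof
  fix V
  let ?V = "\<lambda>\<rho>. qapply W (ketbra T \<tau> \<rho>) V"
  have "qnorm2 W (qapply W (partial_entry T \<sigma> \<tau> K) V)
      = (\<Sum>\<rho>\<in>Pow T. \<Sum>A\<in>Pow (W - T). (cmod (qapply W K (?V \<rho>) (A \<union> \<sigma>)))\<^sup>2)"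
    unfolding qnorm2_def sum_Pow_split[OF fin T(1)] using fin T
    by (intro sum.cong refl) (simp add: qapply_partial_entry)
  also have "\<dots> \<le> (\<Sum>\<rho>\<in>Pow T. qnorm2 W (qapply W K (?V \<rho>)))"
    unfolding qnorm2_def by (intro sum_mono sum_Pow_slice_le[OF fin T(1,2)]) simp
  also have "\<dots> \<le> (\<Sum>\<rho>\<in>Pow T. qnorm2 W (?V \<rho>))"
    using K unfolding contraction_def by (intro sum_mono) auto
  also have "\<dots> = (\<Sum>\<rho>\<in>Pow T. \<Sum>B\<in>Pow (W - T). (cmod (V (B \<union> \<rho>)))\<^sup>2)"
    using fin T by (intro sum.cong refl) (simp add: qnorm2_qapply_ketbra)
  also have "\<dots> = qnorm2 W V"
    by (simp add: qnorm2_def sum_Pow_split[OF fin T(1)])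
  finally show "qnorm2 W (qapply W (partial_entry T \<sigma> \<tau> K) V) \<le> qnorm2 W V" .
qed

definition split_state :: "nat set \<Rightarrow> 'i set \<Rightarrow> ('i \<Rightarrow> qop) \<Rightarrow> ('i \<Rightarrow> qop) \<Rightarrow> qvec \<Rightarrow> qvec" where
  "split_state W I X Y \<Psi> = (\<lambda>A. \<Sum>t\<in>I. qapply W (X t) (qapply W (Y t) \<Psi>) A)"

lemma qapply_split_state:
  assumes "finite W"
  shows "qapply W K (split_state W I X Y \<Psi>) = split_state W I (\<lambda>t. qcomp W K (X t)) Y \<Psi>"
  by (simp add: split_state_def qapply_sum qapply_qcomp[OF assms])

lemma split_state_swap:
  assumes "finite W" and "\<And>t. t \<in> I \<Longrightarrow> acts_on W S (X t) \<and> acts_on W (W - S) (Y t)"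
  shows "split_state W I X Y \<Psi> = split_state W I Y X \<Psi>"
proof -
  have "qapply W (X t) (qapply W (Y t) \<Psi>) = qapply W (Y t) (qapply W (X t) \<Psi>)" if "t \<in> I" for t
    using assms(2)[OF that] qapply_commute[OF assms(1)] by blast
  then show ?thesis unfolding split_state_def by (intro ext sum.cong) simp_all
qed

lemma split_state_transfer:
  assumes "finite W" "T \<subseteq> W"
  shows "split_state W I X Y \<Psi> = split_state W (I \<times> (Pow T \<times> Pow T))
    (\<lambda>(t, \<sigma>, \<tau>). partial_entry T \<sigma> \<tau> (X t)) (\<lambda>(t, \<sigma>, \<tau>). qcomp W (ketbra T \<sigma> \<tau>) (Y t)) \<Psi>"
  unfolding split_state_def
  by (subst qapply_eq_sum_partial_entry_ketbra[OF assms])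
    (simp add: qapply_qcomp[OF assms(1)] sum.cartesian_product case_prod_unfold)

lemma split_state_reindex:
  "inj_on h I \<Longrightarrow> split_state W (h ` I) X Y \<Psi> = split_state W I (X \<circ> h) (Y \<circ> h) \<Psi>"
  by (simp add: split_state_def sum.reindex)

lemma split_state_qid:
  assumes "finite W" "\<And>A. \<not> A \<subseteq> W \<Longrightarrow> \<Psi> A = 0"
  shows "split_state W {t} (\<lambda>_. qid) (\<lambda>_. qid) \<Psi> = \<Psi>"
proof
  fix A
  show "split_state W {t} (\<lambda>_. qid) (\<lambda>_. qid) \<Psi> A = \<Psi> A"
    using assms by (cases "A \<subseteq> W") (simp_all add: split_state_def qapply_qid)
qed

definition cross_vec :: "nat set \<Rightarrow> ('i \<Rightarrow> qop) \<Rightarrow> qvec \<Rightarrow> 'i \<Rightarrow> 'i \<Rightarrow> qvec" where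
  "cross_vec W X \<Psi> t t' = qapply W (qadj (X t)) (qapply W (X t') \<Psi>)"

lemma qnorm2_cross_vec_le:
  assumes "finite W" "contraction W (X t)" "contraction W (X t')" "qnorm2 W \<Psi> = 1"
  shows "qnorm2 W (cross_vec W X \<Psi> t t') \<le> 1"
proof -
  have "qnorm2 W (cross_vec W X \<Psi> t t') \<le> qnorm2 W (qapply W (X t') \<Psi>)"
    using contraction_qadj[OF assms(1,2)] by (simp add: contraction_def cross_vec_def)
  also have "\<dots> \<le> qnorm2 W \<Psi>"
    using assms(3) by (simp add: contraction_def)
  finally show ?thesis using assms(4) by simp
qed

lemma sum_qnorm2_cross_vec_le:
  assumes "finite W" "qnorm2 W \<Psi> = 1" "\<And>t. t \<in> I \<Longrightarrow> contraction W (X t)"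
  shows "(\<Sum>t\<in>I. \<Sum>t'\<in>I. qnorm2 W (cross_vec W X \<Psi> t t')) \<le> real (card I * card I)"
proof -
  have "(\<Sum>t\<in>I. \<Sum>t'\<in>I. qnorm2 W (cross_vec W X \<Psi> t t')) \<le> (\<Sum>t\<in>I. \<Sum>t'\<in>I. 1)"
    using assms by (intro sum_mono qnorm2_cross_vec_le) auto
  then show ?thesis by simp
qed

lemma qinner_sum_sum:
  "qinner W (\<lambda>A. \<Sum>t\<in>I. U t A) (\<lambda>A. \<Sum>t'\<in>I'. V t' A) = (\<Sum>t\<in>I. \<Sum>t'\<in>I'. qinner W (U t) (V t'))"
proof -
  have "qinner W (\<lambda>A. \<Sum>t\<in>I. U t A) (\<lambda>A. \<Sum>t'\<in>I'. V t' A)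
      = (\<Sum>A\<in>Pow W. \<Sum>t\<in>I. \<Sum>t'\<in>I'. cnj (U t A) * V t' A)"
    by (simp add: qinner_def sum_product)
  also have "\<dots> = (\<Sum>t\<in>I. \<Sum>A\<in>Pow W. \<Sum>t'\<in>I'. cnj (U t A) * V t' A)"
    by (rule sum.swap)
  also have "\<dots> = (\<Sum>t\<in>I. \<Sum>t'\<in>I'. \<Sum>A\<in>Pow W. cnj (U t A) * V t' A)"
    by (intro sum.cong refl sum.swap)
  finally show ?thesis by (simp add: qinner_def)
qed

lemma qnorm2_split_state:
  assumes fin: "finite W"
    and parts: "\<And>t. t \<in> I \<Longrightarrow> acts_on W S (X t) \<and> acts_on W (W - S) (Y t)"
  shows "qnorm2 W (split_state W I X Y \<Psi>)
    = (\<Sum>t\<in>I. \<Sum>t'\<in>I. Re (qinner W (cross_vec W Y \<Psi> t' t) (cross_vec W X \<Psi> t t')))"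
proof -
  have summand: "qinner W (qapply W (X t) (qapply W (Y t) \<Psi>)) (qapply W (X t') (qapply W (Y t') \<Psi>))
      = qinner W (cross_vec W Y \<Psi> t' t) (cross_vec W X \<Psi> t t')"
    if "t \<in> I" "t' \<in> I" for t t'
  proof -
    have "qapply W (X t') (qapply W (Y t') \<Psi>) = qapply W (Y t') (qapply W (X t') \<Psi>)"
      using parts[OF that(2)] by (intro qapply_commute[OF fin]) auto
    moreover have "qapply W (qadj (X t)) (qapply W (Y t') V)
        = qapply W (Y t') (qapply W (qadj (X t)) V)" for V
      using parts that by (intro qapply_commute[OF fin]) (auto intro: acts_on_qadj)
    ultimately show ?thesis
      using qinner_qapply_qadj[OF fin, of "X t"] qinner_qapply_qadj[OF fin, of "qadj (Y t')"]
      by (simp add: cross_vec_def)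
  qed
  have "qnorm2 W (split_state W I X Y \<Psi>)
      = Re (\<Sum>t\<in>I. \<Sum>t'\<in>I.
          qinner W (qapply W (X t) (qapply W (Y t) \<Psi>)) (qapply W (X t') (qapply W (Y t') \<Psi>)))"
    by (simp add: qnorm2_eq_Re_qinner split_state_def qinner_sum_sum)
  also have "\<dots> = Re (\<Sum>t\<in>I. \<Sum>t'\<in>I. qinner W (cross_vec W Y \<Psi> t' t) (cross_vec W X \<Psi> t t'))"
    by (intro arg_cong[where f = Re] sum.cong refl summand)
  finally show ?thesis by (simp add: Re_sum)
qed

lemma qapply_split_state_right:
  assumes fin: "finite W" and S: "S \<subseteq> W" and K: "acts_on W (W - S) K"
    and parts: "\<And>t. t \<in> I \<Longrightarrow> acts_on W S (X t) \<and> acts_on W (W - S) (Y t)"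
  shows "qapply W K (split_state W I X Y \<Psi>) = split_state W I X (\<lambda>t. qcomp W K (Y t)) \<Psi>"
proof -
  have "W - (W - S) = S" using S by blast
  then have "split_state W I (\<lambda>t. qcomp W K (Y t)) X \<Psi> = split_state W I X (\<lambda>t. qcomp W K (Y t)) \<Psi>"
    using parts K fin
    by (intro split_state_swap[OF fin, where S = "W - S"]) (auto intro: acts_on_qcomp)
  then show ?thesis
    by (simp add: split_state_swap[OF fin parts] qapply_split_state[OF fin])
qed

text \<open>Whenever the qubits T j are sent in round j, every term of the joint state splits along
  a pair (\<sigma>, \<tau>) of basis states of T j (split_state_transfer): the speaker's operator keeps
  the partial entry \<langle>\<sigma>|K|\<tau>\<rangle>, the listener's operator receives |\<sigma>\<rangle>\<langle>\<tau>| on T j.  A transcript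
  lists these pairs.\<close>
fun transcripts :: "(nat \<Rightarrow> nat set) \<Rightarrow> nat \<Rightarrow> (nat set \<times> nat set) list set" where
  "transcripts T 0 = {[]}"
| "transcripts T (Suc j) = (\<lambda>(r, e). r @ [e]) ` (transcripts T j \<times> (Pow (T j) \<times> Pow (T j)))"

lemma inj_on_snoc: "inj_on (\<lambda>(r, e). r @ [e]) A"
  by (auto simp: inj_on_def)

lemma finite_transcripts: "(\<And>i. i < j \<Longrightarrow> finite (T i)) \<Longrightarrow> finite (transcripts T j)"
  by (induction j) auto

lemma card_transcripts_le:
  "(\<And>i. i < j \<Longrightarrow> finite (T i)) \<Longrightarrow> card (transcripts T j) \<le> 4 ^ (\<Sum>i<j. card (T i))"
proof (induction j)
  case (Suc j)
  have "card (transcripts T (Suc j)) = card (transcripts T j) * (2 ^ card (T j) * 2 ^ card (T j))"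
    using Suc.prems by (simp add: card_image[OF inj_on_snoc] card_cartesian_product card_Pow)
  also have "\<dots> \<le> 4 ^ (\<Sum>i<j. card (T i)) * 4 ^ card (T j)"
    using Suc by (simp add: power_mult_distrib[symmetric])
  also have "\<dots> = 4 ^ (\<Sum>i<Suc j. card (T i))"
    by (simp add: power_add)
  finally show ?case .
qed simp

fun party_op :: "nat set \<Rightarrow> (nat \<Rightarrow> bool) \<Rightarrow> (nat \<Rightarrow> nat set) \<Rightarrow> (nat \<Rightarrow> qop) \<Rightarrow> nat
    \<Rightarrow> (nat set \<times> nat set) list \<Rightarrow> qop" where
  "party_op W speaks T K 0 t = qid"
| "party_op W speaks T K (Suc j) t = (case last t of (\<sigma>, \<tau>) \<Rightarrow>
     if speaks j then partial_entry (T j) \<sigma> \<tau> (qcomp W (K j) (party_op W speaks T K j (butlast t)))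
     else qcomp W (ketbra (T j) \<sigma> \<tau>) (party_op W speaks T K j (butlast t)))"

declare party_op.simps(2) [simp del]

lemma party_op_snoc [simp]:
  "party_op W speaks T K (Suc j) (r @ [(\<sigma>, \<tau>)]) =
    (if speaks j then partial_entry (T j) \<sigma> \<tau> (qcomp W (K j) (party_op W speaks T K j r))
     else qcomp W (ketbra (T j) \<sigma> \<tau>) (party_op W speaks T K j r))"
  by (simp add: party_op.simps(2))

locale party =
  fixes W :: "nat set" and k :: nat and speaks :: "nat \<Rightarrow> bool" and T :: "nat \<Rightarrow> nat set"
    and Own :: "nat \<Rightarrow> nat set" and K :: "nat \<Rightarrow> qop"
  assumes finite_W: "finite W"
    and owned_subset: "\<And>j. j \<le> k \<Longrightarrow> Own j \<subseteq> W"
    and owned_Suc: "\<And>j. j < k \<Longrightarrow> Own (Suc j) = (if speaks j then Own j - T j else Own j \<union> T j)"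
    and sent_owned: "\<And>j. j < k \<Longrightarrow> speaks j \<Longrightarrow> T j \<subseteq> Own j"
    and round_op: "\<And>j. j < k \<Longrightarrow> speaks j \<Longrightarrow> contraction W (K j) \<and> acts_on W (Own j) (K j)"
begin

lemma sent_subset: "j < k \<Longrightarrow> T j \<subseteq> W"
  using owned_subset[of "Suc j"] owned_Suc[of j] sent_owned[of j] owned_subset[of j]
  by (auto split: if_splits)

lemma party_op_local_contraction:
  "j \<le> k \<Longrightarrow> t \<in> transcripts T j \<Longrightarrow>
    contraction W (party_op W speaks T K j t) \<and> acts_on W (Own j) (party_op W speaks T K j t)"
proof (induction j arbitrary: t)
  case 0
  then show ?case using finite_W by (simp add: contraction_qid acts_on_qid)
next
  case (Suc j)
  then obtain r \<sigma> \<tau> where t: "t = r @ [(\<sigma>, \<tau>)]" and r: "r \<in> transcripts T j"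
    and st: "\<sigma> \<subseteq> T j" "\<tau> \<subseteq> T j"
    by auto
  let ?P = "party_op W speaks T K j r"
  have jk: "j < k" using Suc.prems by simp
  have P: "contraction W ?P" "acts_on W (Own j) ?P" using Suc.IH[OF _ r] jk by auto
  have TW: "T j \<subseteq> W" and OW: "Own j \<subseteq> W" "Own (Suc j) \<subseteq> W"
    using sent_subset jk owned_subset Suc.prems by auto
  show ?case
  proof (cases "speaks j")
    case True
    have KP: "contraction W (qcomp W (K j) ?P)" "acts_on W (Own j) (qcomp W (K j) ?P)"
      using round_op[OF jk True] P finite_W OW by (auto intro: contraction_qcomp acts_on_qcomp)
    have "Own j = Own (Suc j) \<union> T j" "Own (Suc j) \<inter> T j = {}"
      using owned_Suc[OF jk] sent_owned[OF jk True] True by auto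
    then show ?thesis
      using t True KP finite_W TW st
      by (auto intro: contraction_partial_entry acts_on_partial_entry)
  next
    case False
    have "Own (Suc j) = Own j \<union> T j" using owned_Suc[OF jk] False by simp
    then show ?thesis
      using t False P finite_W TW st OW
      by (auto intro!: contraction_qcomp contraction_ketbra acts_on_qcomp
          intro: acts_on_mono[OF _ acts_on_ketbra] acts_on_mono[OF _ P(2)])
  qed
qed

end

locale protocol_run =
  fixes W :: "nat set" and k :: nat and s :: "nat \<Rightarrow> bool" and T :: "nat \<Rightarrow> nat set"
    and Al :: "nat \<Rightarrow> nat set" and KA KB :: "nat \<Rightarrow> qop"
  assumes finite_W: "finite W"
    and alice_0: "Al 0 \<subseteq> W"
    and alice_Suc: "\<And>j. Al (Suc j) = (if s j then Al j - T j else Al j \<union> T j)"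
    and sent_owned: "\<And>j. j < k \<Longrightarrow> T j \<subseteq> (if s j then Al j else W - Al j)"
    and alice_round: "\<And>j. j < k \<Longrightarrow> s j \<Longrightarrow> contraction W (KA j) \<and> acts_on W (Al j) (KA j)"
    and bob_round: "\<And>j. j < k \<Longrightarrow> \<not> s j \<Longrightarrow> contraction W (KB j) \<and> acts_on W (W - Al j) (KB j)"
begin

lemma alice_subset: "j \<le> k \<Longrightarrow> Al j \<subseteq> W"
proof (induction j)
  case (Suc j)
  then show ?case using sent_owned[of j] alice_Suc[of j] by (auto split: if_splits)
qed (use alice_0 in simp)

sublocale alice: party W k s T Al KA
proof
  fix j
  show "j \<le> k \<Longrightarrow> Al j \<subseteq> W" by (rule alice_subset)
  show "Al (Suc j) = (if s j then Al j - T j else Al j \<union> T j)" by (rule alice_Suc)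
  show "j < k \<Longrightarrow> s j \<Longrightarrow> T j \<subseteq> Al j" using sent_owned[of j] by simp
  show "j < k \<Longrightarrow> s j \<Longrightarrow> contraction W (KA j) \<and> acts_on W (Al j) (KA j)" by (rule alice_round)
qed (rule finite_W)

sublocale bob: party W k "\<lambda>j. \<not> s j" T "\<lambda>j. W - Al j" KB
proof
  fix j
  show "W - Al j \<subseteq> W" by blast
  show "j < k \<Longrightarrow> W - Al (Suc j) = (if \<not> s j then W - Al j - T j else W - Al j \<union> T j)"
    using sent_owned[of j] alice_Suc[of j] alice_subset[of j] by (cases "s j") auto
  show "j < k \<Longrightarrow> \<not> s j \<Longrightarrow> T j \<subseteq> W - Al j" using sent_owned[of j] by simp
  show "j < k \<Longrightarrow> \<not> s j \<Longrightarrow> contraction W (KB j) \<and> acts_on W (W - Al j) (KB j)"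
    by (rule bob_round)
qed (rule finite_W)

abbreviation "alice_op \<equiv> party_op W s T KA"
abbreviation "bob_op \<equiv> party_op W (\<lambda>j. \<not> s j) T KB"

lemma split_state_step:
  assumes jk: "j < k"
  shows "qapply W (if s j then KA j else KB j)
      (split_state W (transcripts T j) (alice_op j) (bob_op j) \<Psi>)
    = split_state W (transcripts T (Suc j)) (alice_op (Suc j)) (bob_op (Suc j)) \<Psi>"
proof -
  let ?I = "transcripts T j" and ?I' = "transcripts T j \<times> (Pow (T j) \<times> Pow (T j))"
  have TW: "T j \<subseteq> W" using alice.sent_subset[OF jk] .
  have reindex: "split_state W (transcripts T (Suc j)) X' Y' \<Psi> = split_state W ?I'
      (\<lambda>(r, \<sigma>, \<tau>). X' (r @ [(\<sigma>, \<tau>)])) (\<lambda>(r, \<sigma>, \<tau>). Y' (r @ [(\<sigma>, \<tau>)])) \<Psi>" for X' Y'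
    unfolding transcripts.simps split_state_reindex[OF inj_on_snoc]
    by (simp add: comp_def case_prod_unfold)
  show ?thesis
  proof (cases "s j")
    case True
    have "qapply W (KA j) (split_state W ?I (alice_op j) (bob_op j) \<Psi>)
        = split_state W ?I (\<lambda>r. qcomp W (KA j) (alice_op j r)) (bob_op j) \<Psi>"
      by (rule qapply_split_state[OF finite_W])
    also have "\<dots> = split_state W ?I'
        (\<lambda>(r, \<sigma>, \<tau>). partial_entry (T j) \<sigma> \<tau> (qcomp W (KA j) (alice_op j r)))
        (\<lambda>(r, \<sigma>, \<tau>). qcomp W (ketbra (T j) \<sigma> \<tau>) (bob_op j r)) \<Psi>"
      by (rule split_state_transfer[OF finite_W TW])
    also have "\<dots> = split_state W (transcripts T (Suc j)) (alice_op (Suc j)) (bob_op (Suc j)) \<Psi>"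
      unfolding reindex using True by simp
    finally show ?thesis using True by simp
  next
    case False
    have "qapply W (KB j) (split_state W ?I (alice_op j) (bob_op j) \<Psi>)
        = qapply W (KB j) (split_state W ?I (bob_op j) (alice_op j) \<Psi>)"
      using jk alice.party_op_local_contraction bob.party_op_local_contraction
      by (subst split_state_swap[OF finite_W, where S = "Al j"]) auto
    also have "\<dots> = split_state W ?I (\<lambda>r. qcomp W (KB j) (bob_op j r)) (alice_op j) \<Psi>"
      by (rule qapply_split_state[OF finite_W])
    also have "\<dots> = split_state W ?I'
        (\<lambda>(r, \<sigma>, \<tau>). partial_entry (T j) \<sigma> \<tau> (qcomp W (KB j) (bob_op j r)))
        (\<lambda>(r, \<sigma>, \<tau>). qcomp W (ketbra (T j) \<sigma> \<tau>) (alice_op j r)) \<Psi>"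
      by (rule split_state_transfer[OF finite_W TW])
    also have "\<dots> = split_state W (transcripts T (Suc j)) (bob_op (Suc j)) (alice_op (Suc j)) \<Psi>"
      unfolding reindex using False by simp
    also have "\<dots> = split_state W (transcripts T (Suc j)) (alice_op (Suc j)) (bob_op (Suc j)) \<Psi>"
    proof (rule split_state_swap[OF finite_W, where S = "W - Al (Suc j)"])
      fix t assume "t \<in> transcripts T (Suc j)"
      moreover have "W - (W - Al (Suc j)) = Al (Suc j)" using alice_subset[of "Suc j"] jk by auto
      ultimately show "acts_on W (W - Al (Suc j)) (bob_op (Suc j) t) \<and>
          acts_on W (W - (W - Al (Suc j))) (alice_op (Suc j) t)"
        using jk alice.party_op_local_contraction[of "Suc j" t]
          bob.party_op_local_contraction[of "Suc j" t]
        by simp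
    qed
    finally show ?thesis using False by simp
  qed
qed

lemma split_state_run:
  assumes "\<And>A. \<not> A \<subseteq> W \<Longrightarrow> \<Psi> A = 0" and "V 0 = \<Psi>"
    and "\<And>j. j < k \<Longrightarrow> V (Suc j) = qapply W (if s j then KA j else KB j) (V j)"
  shows "j \<le> k \<Longrightarrow> V j = split_state W (transcripts T j) (alice_op j) (bob_op j) \<Psi>"
proof (induction j)
  case 0
  then show ?case
    using assms split_state_qid[OF finite_W assms(1), where t = "[] :: (nat set \<times> nat set) list"]
    by simp
next
  case (Suc j)
  then show ?case using assms(3) split_state_step by simp
qed

end

lemma realizes_with_margin_finite_index:
  fixes \<alpha> :: "'a \<Rightarrow> 'j \<Rightarrow> real" and \<beta> :: "'b \<Rightarrow> 'j \<Rightarrow> real"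
  assumes "finite J" "g > 0"
    and "\<And>x. x \<in> X \<Longrightarrow> (\<Sum>j\<in>J. (\<alpha> x j)\<^sup>2) = 1" "\<And>y. y \<in> Y \<Longrightarrow> (\<Sum>j\<in>J. (\<beta> y j)\<^sup>2) = 1"
    and "\<And>x y. x \<in> X \<Longrightarrow> y \<in> Y \<Longrightarrow> \<not> f x y \<Longrightarrow> (\<Sum>j\<in>J. \<alpha> x j * \<beta> y j) \<ge> g"
    and "\<And>x y. x \<in> X \<Longrightarrow> y \<in> Y \<Longrightarrow> f x y \<Longrightarrow> (\<Sum>j\<in>J. \<alpha> x j * \<beta> y j) \<le> - g"
  shows "realizes_with_margin X Y f g"
proof -
  obtain h where h: "bij_betw h {0..<card J} J" using ex_bij_betw_nat_finite[OF assms(1)] by blast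
  have reindex: "(\<Sum>i<card J. F (h i)) = (\<Sum>j\<in>J. F j)" for F :: "'j \<Rightarrow> real"
    using sum.reindex_bij_betw[OF h, of F] by (simp add: atLeast0LessThan)
  show ?thesis
    unfolding realizes_with_margin_def
    by (intro conjI exI[of _ "card J"] exI[of _ "\<lambda>x i. \<alpha> x (h i)"] exI[of _ "\<lambda>y i. \<beta> y (h i)"])
      (use assms in \<open>simp_all add: reindex[of "\<lambda>j. (\<alpha> _ j)\<^sup>2"] reindex[of "\<lambda>j. (\<beta> _ j)\<^sup>2"]
        reindex[of "\<lambda>j. \<alpha> _ j * \<beta> _ j"]\<close>)
qed

text \<open>Negating b and adding a common coordinate sqrt (1/2) turns the inner products into
  1/2 - \<langle>a, b\<rangle>; a private coordinate pads each squared norm up to K + 1/2, and normalising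
  maps the gap between 2/3 and 1/3 to the margin.\<close>
lemma realizes_with_margin_if_bounded_inner:
  fixes a :: "'a \<Rightarrow> 'j \<Rightarrow> real" and b :: "'b \<Rightarrow> 'j \<Rightarrow> real"
  assumes fin: "finite J" and K: "K \<ge> 0"
    and norm_a: "\<And>x. x \<in> X \<Longrightarrow> (\<Sum>j\<in>J. (a x j)\<^sup>2) \<le> K"
    and norm_b: "\<And>y. y \<in> Y \<Longrightarrow> (\<Sum>j\<in>J. (b y j)\<^sup>2) \<le> K"
    and accept: "\<And>x y. x \<in> X \<Longrightarrow> y \<in> Y \<Longrightarrow> f x y \<Longrightarrow> (\<Sum>j\<in>J. a x j * b y j) \<ge> 2/3"
    and reject: "\<And>x y. x \<in> X \<Longrightarrow> y \<in> Y \<Longrightarrow> \<not> f x y \<Longrightarrow> (\<Sum>j\<in>J. a x j * b y j) \<le> 1/3"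
  shows "realizes_with_margin X Y f (1 / (6 * K + 3))"
proof -
  define R where "R = K + 1/2"
  have R: "R > 0" using K by (simp add: R_def)
  define c where "c = 1 / sqrt R"
  have c: "c\<^sup>2 = 1 / R" using R by (simp add: c_def power_divide)
  define \<alpha> where "\<alpha> x = case_sum (\<lambda>j. c * a x j)
    (\<lambda>i. c * [sqrt (1/2), sqrt (K - (\<Sum>j\<in>J. (a x j)\<^sup>2)), 0] ! i)" for x
  define \<beta> where "\<beta> y = case_sum (\<lambda>j. - c * b y j)
    (\<lambda>i. c * [sqrt (1/2), 0, sqrt (K - (\<Sum>j\<in>J. (b y j)\<^sup>2))] ! i)" for y
  have sum3: "(\<Sum>i<3. g i) = g 0 + g 1 + g 2" for g :: "nat \<Rightarrow> real"
    by (simp add: numeral_3_eq_3 numeral_2_eq_2)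
  have sum_Plus: "(\<Sum>j\<in>J <+> {..<3}. F j) = (\<Sum>j\<in>J. F (Inl j)) + (\<Sum>i<3. F (Inr i))"
    for F :: "'j + nat \<Rightarrow> real"
    using fin by (simp add: sum.Plus)
  show ?thesis
  proof (rule realizes_with_margin_finite_index[where J = "J <+> {..<3}" and \<alpha> = \<alpha> and \<beta> = \<beta>])
    show "finite (J <+> {..<3::nat})" using fin by simp
    show "0 < 1 / (6 * K + 3)" using K by simp
  next
    fix x assume "x \<in> X"
    then show "(\<Sum>j\<in>J <+> {..<3}. (\<alpha> x j)\<^sup>2) = 1"
      using norm_a[of x] c R
      by (simp add: sum_Plus sum3 \<alpha>_def power_mult_distrib sum_distrib_left[symmetric]
          R_def field_simps)
  next
    fix y assume "y \<in> Y"
    then show "(\<Sum>j\<in>J <+> {..<3}. (\<beta> y j)\<^sup>2) = 1"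
      using norm_b[of y] c R
      by (simp add: sum_Plus sum3 \<beta>_def power_mult_distrib sum_distrib_left[symmetric]
          R_def field_simps)
  next
    fix x y assume xy: "x \<in> X" "y \<in> Y"
    have "(\<Sum>j\<in>J <+> {..<3}. \<alpha> x j * \<beta> y j) = c\<^sup>2 * (1/2 - (\<Sum>j\<in>J. a x j * b y j))"
      by (simp add: sum_Plus sum3 \<alpha>_def \<beta>_def sum_negf sum_distrib_left[symmetric]
          power2_eq_square algebra_simps)
    then have "(\<Sum>j\<in>J <+> {..<3}. \<alpha> x j * \<beta> y j) = (1/2 - (\<Sum>j\<in>J. a x j * b y j)) / R"
      using c by simp
    moreover have "1 / (6 * K + 3) = (1/6) / R" by (simp add: R_def field_simps)
    moreover have "\<not> f x y \<Longrightarrow> (1/6) / R \<le> (1/2 - (\<Sum>j\<in>J. a x j * b y j)) / R"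
      using reject[OF xy] R by (intro divide_right_mono) auto
    moreover have "f x y \<Longrightarrow> (1/2 - (\<Sum>j\<in>J. a x j * b y j)) / R \<le> (- 1/6) / R"
      using accept[OF xy] R by (intro divide_right_mono) auto
    ultimately show "\<not> f x y \<Longrightarrow> 1 / (6 * K + 3) \<le> (\<Sum>j\<in>J <+> {..<3}. \<alpha> x j * \<beta> y j)"
      and "f x y \<Longrightarrow> (\<Sum>j\<in>J <+> {..<3}. \<alpha> x j * \<beta> y j) \<le> - (1 / (6 * K + 3))"
      by simp_all
  qed
qed

lemma realizes_with_margin_if_bounded_cinner:
  fixes u :: "'a \<Rightarrow> 'j \<Rightarrow> complex" and v :: "'b \<Rightarrow> 'j \<Rightarrow> complex"
  assumes fin: "finite J" and K: "K \<ge> 0"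
    and norm_u: "\<And>x. x \<in> X \<Longrightarrow> (\<Sum>j\<in>J. (cmod (u x j))\<^sup>2) \<le> K"
    and norm_v: "\<And>y. y \<in> Y \<Longrightarrow> (\<Sum>j\<in>J. (cmod (v y j))\<^sup>2) \<le> K"
    and accept: "\<And>x y. x \<in> X \<Longrightarrow> y \<in> Y \<Longrightarrow> f x y \<Longrightarrow> (\<Sum>j\<in>J. Re (cnj (v y j) * u x j)) \<ge> 2/3"
    and reject: "\<And>x y. x \<in> X \<Longrightarrow> y \<in> Y \<Longrightarrow> \<not> f x y \<Longrightarrow> (\<Sum>j\<in>J. Re (cnj (v y j) * u x j)) \<le> 1/3"
  shows "realizes_with_margin X Y f (1 / (6 * K + 3))"
proof -
  define re_im :: "complex \<Rightarrow> bool \<Rightarrow> real" where "re_im z b = (if b then Re z else Im z)" for z b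
  have sum_bool: "(\<Sum>q\<in>J \<times> UNIV. F (fst q) (snd q)) = (\<Sum>j\<in>J. F j True + F j False)"
    for F :: "'j \<Rightarrow> bool \<Rightarrow> real"
    by (simp add: sum.cartesian_product' UNIV_bool add.commute)
  have norm_eq: "(\<Sum>q\<in>J \<times> UNIV. (re_im (w (fst q)) (snd q))\<^sup>2) = (\<Sum>j\<in>J. (cmod (w j))\<^sup>2)" for w
    using sum_bool[of "\<lambda>j b. (re_im (w j) b)\<^sup>2"] by (simp add: re_im_def cmod_power2)
  have inner_eq: "(\<Sum>q\<in>J \<times> UNIV. re_im (w (fst q)) (snd q) * re_im (w' (fst q)) (snd q))
      = (\<Sum>j\<in>J. Re (cnj (w' j) * w j))" for w w'
    using sum_bool[of "\<lambda>j b. re_im (w j) b * re_im (w' j) b"] by (simp add: re_im_def mult.commute)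
  show ?thesis
    by (rule realizes_with_margin_if_bounded_inner[where J = "J \<times> UNIV"
          and a = "\<lambda>x q. re_im (u x (fst q)) (snd q)" and b = "\<lambda>y q. re_im (v y (fst q)) (snd q)"])
      (use fin K norm_u norm_v accept reject in
        \<open>simp_all only: norm_eq inner_eq finite_SigmaI finite\<close>)
qed

lemma realizes_with_margin_le_1:
  assumes "x \<in> X" "y \<in> Y" "realizes_with_margin X Y f g"
  shows "g \<le> 1"
proof -
  obtain d \<alpha> \<beta> where norm: "(\<Sum>i<(d::nat). (\<alpha> x i)\<^sup>2) = 1" "(\<Sum>i<d. (\<beta> y i)\<^sup>2) = (1::real)"
    and margin: "(\<not> f x y \<longrightarrow> (\<Sum>i<d. \<alpha> x i * \<beta> y i) \<ge> g) \<and> (f x y \<longrightarrow> (\<Sum>i<d. \<alpha> x i * \<beta> y i) \<le> - g)"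
    using assms unfolding realizes_with_margin_def by blast
  have "(\<Sum>i<d. \<alpha> x i * \<beta> y i)\<^sup>2 \<le> 1"
    using Cauchy_Schwarz_ineq_sum[of "\<alpha> x" "\<beta> y" "{..<d}"] norm by simp
  then have "\<bar>\<Sum>i<d. \<alpha> x i * \<beta> y i\<bar> \<le> 1" using abs_square_le_1 by blast
  with margin show ?thesis by (cases "f x y") (auto simp: abs_le_iff)
qed

lemma margin_gamma_ge:
  assumes "x \<in> X" "y \<in> Y" "realizes_with_margin X Y f g"
  shows "g \<le> margin_gamma X Y f"
proof -
  have "bdd_above {g. realizes_with_margin X Y f g}"
    using realizes_with_margin_le_1[OF assms(1,2)] by (intro bdd_aboveI) auto
  then show ?thesis unfolding margin_gamma_def using assms(3) by (intro cSup_upper) auto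
qed

definition bit_set :: "nat \<Rightarrow> nat \<Rightarrow> nat set" where
  "bit_set N a = {i. i < N \<and> bit a i}"

definition bit_index :: "nat \<Rightarrow> nat set \<Rightarrow> nat" where
  "bit_index N = the_inv_into {..<2^N} (bit_set N)"

lemma bit_nat_less_power_iff: "(a::nat) < 2^N \<Longrightarrow> bit a i \<longleftrightarrow> i < N \<and> bit a i"
  by (metis bit_take_bit_iff take_bit_nat_eq_self_iff)

lemma inj_on_bit_set: "inj_on (bit_set N) {..<2^N}"
proof (rule inj_onI)
  fix a b assume ab: "a \<in> {..<2^N}" "b \<in> {..<2^N}" "bit_set N a = bit_set N b"
  show "a = b"
  proof (rule bit_eqI)
    fix i
    have "(i < N \<and> bit a i) = (i < N \<and> bit b i)" using ab(3) unfolding bit_set_def by blast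
    then show "bit a i = bit b i"
      using bit_nat_less_power_iff[of a N i] bit_nat_less_power_iff[of b N i] ab by auto
  qed
qed

lemma bij_betw_bit_set: "bij_betw (bit_set N) {..<2^N} (Pow {..<N})"
proof -
  have sub: "bit_set N ` {..<2^N} \<subseteq> Pow {..<N}" by (auto simp: bit_set_def)
  have "card (bit_set N ` {..<2^N}) = card (Pow {..<N})"
    using card_image[OF inj_on_bit_set[of N]] by (simp add: card_Pow)
  then have "bit_set N ` {..<2^N} = Pow {..<N}" using sub by (intro card_subset_eq) auto
  then show ?thesis using inj_on_bit_set by (simp add: bij_betw_def)
qed

lemma bij_betw_bit_index: "bij_betw (bit_index N) (Pow {..<N}) {..<2^N}"
  unfolding bit_index_def by (rule bij_betw_the_inv_into[OF bij_betw_bit_set])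

lemma bit_index_less: "A \<subseteq> {..<N} \<Longrightarrow> bit_index N A < 2^N"
  using bij_betw_bit_index[of N] by (auto simp: bij_betw_def)

lemma bit_set_bit_index: "A \<subseteq> {..<N} \<Longrightarrow> bit_set N (bit_index N A) = A"
  unfolding bit_index_def using f_the_inv_into_f_bij_betw[OF bij_betw_bit_set] by simp

lemma bit_index_bit_set: "a < 2^N \<Longrightarrow> bit_index N (bit_set N a) = a"
  unfolding bit_index_def using the_inv_into_f_f[OF inj_on_bit_set] by simp

lemma bit_index_eq_iff: "A \<subseteq> {..<N} \<Longrightarrow> B \<subseteq> {..<N} \<Longrightarrow> bit_index N A = bit_index N B \<longleftrightarrow> A = B"
  by (metis bit_set_bit_index)

lemma bit_bit_index: "A \<subseteq> {..<N} \<Longrightarrow> bit (bit_index N A) i \<longleftrightarrow> i \<in> A"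
proof -
  assume A: "A \<subseteq> {..<N}"
  have "bit (bit_index N A) i \<longleftrightarrow> i < N \<and> bit (bit_index N A) i"
    using bit_nat_less_power_iff bit_index_less[OF A] by blast
  also have "\<dots> \<longleftrightarrow> i \<in> bit_set N (bit_index N A)" by (simp add: bit_set_def)
  finally show ?thesis using bit_set_bit_index[OF A] by simp
qed

lemma sum_bit_index: "(\<Sum>a<2^N. g a) = (\<Sum>A\<in>Pow {..<N}. g (bit_index N A))"
  by (rule sum.reindex_bij_betw[OF bij_betw_bit_index, symmetric])

definition set_op :: "nat \<Rightarrow> (nat \<Rightarrow> nat \<Rightarrow> complex) \<Rightarrow> qop" where
  "set_op N M = (\<lambda>A B. M (bit_index N A) (bit_index N B))"

definition set_vec :: "nat \<Rightarrow> (nat \<Rightarrow> complex) \<Rightarrow> qvec" where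
  "set_vec N v = (\<lambda>A. if A \<subseteq> {..<N} then v (bit_index N A) else 0)"

lemma set_vec_apply_op: "set_vec N (apply_op (2^N) M v) = qapply {..<N} (set_op N M) (set_vec N v)"
proof (rule ext)
  fix A show "set_vec N (apply_op (2^N) M v) A = qapply {..<N} (set_op N M) (set_vec N v) A"
    by (auto simp: set_vec_def qapply_def set_op_def apply_op_def sum_bit_index intro!: sum.cong)
qed

lemma sqnorm_eq_qnorm2: "sqnorm (2^N) v = qnorm2 {..<N} (set_vec N v)"
  by (auto simp: sqnorm_def qnorm2_def set_vec_def sum_bit_index intro!: sum.cong)

lemma contraction_set_op_if_unitary: "is_unitary (2^N) M \<Longrightarrow> contraction {..<N} (set_op N M)"
proof (rule contraction_if_unitary)
  assume u: "is_unitary (2^N) M"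
  fix A B assume AB: "A \<subseteq> {..<N}" "B \<subseteq> {..<N}"
  have "(\<Sum>C\<in>Pow {..<N}. set_op N M A C * cnj (set_op N M B C))
      = (\<Sum>c<2^N. M (bit_index N A) c * cnj (M (bit_index N B) c))"
    by (simp add: sum_bit_index set_op_def)
  also have "\<dots> = (if bit_index N A = bit_index N B then 1 else 0)"
    using u bit_index_less[OF AB(1)] bit_index_less[OF AB(2)] unfolding is_unitary_def by blast
  also have "\<dots> = (if A = B then 1 else 0)" using bit_index_eq_iff[OF AB] by simp
  finally show "(\<Sum>C\<in>Pow {..<N}. set_op N M A C * cnj (set_op N M B C)) = (if A = B then 1 else 0)" .
qed simp

lemma contraction_set_op_if_projector: "is_projector (2^N) M \<Longrightarrow> contraction {..<N} (set_op N M)"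
proof (rule contraction_if_projector)
  assume p: "is_projector (2^N) M"
  fix A B assume AB: "A \<subseteq> {..<N}" "B \<subseteq> {..<N}"
  show "set_op N M A B = cnj (set_op N M B A)"
    using p bit_index_less[OF AB(1)] bit_index_less[OF AB(2)]
    unfolding is_projector_def set_op_def by blast
next
  assume p: "is_projector (2^N) M"
  fix A C assume AC: "A \<subseteq> {..<N}" "C \<subseteq> {..<N}"
  have "(\<Sum>B\<in>Pow {..<N}. set_op N M A B * set_op N M B C)
      = (\<Sum>b<2^N. M (bit_index N A) b * M b (bit_index N C))"
    by (simp add: sum_bit_index set_op_def)
  also have "\<dots> = M (bit_index N A) (bit_index N C)"
    using p bit_index_less[OF AC(1)] bit_index_less[OF AC(2)] unfolding is_projector_def by blast
  finally show "(\<Sum>B\<in>Pow {..<N}. set_op N M A B * set_op N M B C) = set_op N M A C"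
    by (simp add: set_op_def)
qed simp

lemma acts_on_set_op_if_local_op: "local_op N S M \<Longrightarrow> acts_on {..<N} S (set_op N M)"
proof -
  assume "local_op N S M"
  then obtain u where u: "\<And>a b. a < 2^N \<Longrightarrow> b < 2^N \<Longrightarrow> M a b =
          (if (\<forall>i<N. i \<notin> S \<longrightarrow> (bit a i \<longleftrightarrow> bit b i))
           then u (\<lambda>i. i \<in> S \<and> bit a i) (\<lambda>i. i \<in> S \<and> bit b i) else 0)"
    unfolding local_op_def by blast
  show ?thesis unfolding acts_on_def
  proof (intro exI[of _ "\<lambda>\<alpha> \<beta>. u (\<lambda>i. i \<in> \<alpha>) (\<lambda>i. i \<in> \<beta>)"] allI impI)
    fix A B assume AB: "A \<subseteq> {..<N}" "B \<subseteq> {..<N}"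
    have c: "(\<forall>i<N. i \<notin> S \<longrightarrow> (bit (bit_index N A) i \<longleftrightarrow> bit (bit_index N B) i)) = (A - S = B - S)"
      using AB by (auto simp: bit_bit_index)
    have p: "(\<lambda>i. i \<in> S \<and> bit (bit_index N A) i) = (\<lambda>i. i \<in> A \<inter> S)"
      "(\<lambda>i. i \<in> S \<and> bit (bit_index N B) i) = (\<lambda>i. i \<in> B \<inter> S)"
      using AB by (auto simp: bit_bit_index)
    show "set_op N M A B = (if A - S = B - S then u (\<lambda>i. i \<in> A \<inter> S) (\<lambda>i. i \<in> B \<inter> S) else 0)"
      unfolding set_op_def using u[OF bit_index_less[OF AB(1)] bit_index_less[OF AB(2)]] c p by simp
  qed
qed

definition measured_op :: "nat set \<Rightarrow> bool \<Rightarrow> qop \<Rightarrow> ('i \<Rightarrow> qop) \<Rightarrow> 'i \<Rightarrow> qop" where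
  "measured_op W b P X = (\<lambda>t. if b then qcomp W P (X t) else X t)"

context protocol_run
begin

lemma finite_transcripts_run: "finite (transcripts T k)"
  using alice.sent_subset finite_W by (intro finite_transcripts) (auto intro: finite_subset)

lemma card_transcripts_run_squared:
  "real (card (transcripts T k) * card (transcripts T k)) \<le> 16 ^ (\<Sum>j<k. card (T j))"
proof -
  let ?c = "\<Sum>j<k. card (T j)"
  have "card (transcripts T k) \<le> 4 ^ ?c"
    using alice.sent_subset finite_W by (intro card_transcripts_le) (auto intro: finite_subset)
  then have "card (transcripts T k) * card (transcripts T k) \<le> 4 ^ ?c * 4 ^ ?c"
    by (intro mult_le_mono)
  also have "\<dots> = 16 ^ ?c"
    by (simp add: power_mult_distrib[symmetric])
  finally show ?thesis
    by (metis of_nat_le_iff of_nat_numeral of_nat_power)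
qed

lemma measured_op_local_contraction:
  assumes "contraction W P" "if p then acts_on W (Al k) P else acts_on W (W - Al k) P"
    and "t \<in> transcripts T k"
  shows "contraction W (measured_op W p P (alice_op k) t)
      \<and> acts_on W (Al k) (measured_op W p P (alice_op k) t)"
    and "contraction W (measured_op W (\<not> p) P (bob_op k) t)
      \<and> acts_on W (W - Al k) (measured_op W (\<not> p) P (bob_op k) t)"
  using assms alice.party_op_local_contraction[of k t] bob.party_op_local_contraction[of k t]
    finite_W alice_subset[of k]
  by (auto simp: measured_op_def intro: contraction_qcomp acts_on_qcomp)

lemma qnorm2_measured_run:
  assumes "\<And>A. \<not> A \<subseteq> W \<Longrightarrow> \<Psi> A = 0" "V 0 = \<Psi>"
    and "\<And>j. j < k \<Longrightarrow> V (Suc j) = qapply W (if s j then KA j else KB j) (V j)"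
    and P: "contraction W P" "if p then acts_on W (Al k) P else acts_on W (W - Al k) P"
  shows "qnorm2 W (qapply W P (V k)) = (\<Sum>t\<in>transcripts T k. \<Sum>t'\<in>transcripts T k.
    Re (qinner W (cross_vec W (measured_op W (\<not> p) P (bob_op k)) \<Psi> t' t)
                 (cross_vec W (measured_op W p P (alice_op k)) \<Psi> t t')))"
proof -
  have V: "V k = split_state W (transcripts T k) (alice_op k) (bob_op k) \<Psi>"
    using split_state_run[OF assms(1-3)] by simp
  have "qapply W P (V k) = split_state W (transcripts T k)
      (measured_op W p P (alice_op k)) (measured_op W (\<not> p) P (bob_op k)) \<Psi>"
  proof (cases p)
    case True
    then show ?thesis by (simp add: V measured_op_def qapply_split_state[OF finite_W])
  next
    case False
    then show ?thesis
      using P alice_subset[of k] alice.party_op_local_contraction[of k]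
        bob.party_op_local_contraction[of k]
      by (simp add: V measured_op_def qapply_split_state_right[OF finite_W, where S = "Al k"])
  qed
  then show ?thesis
    using measured_op_local_contraction[OF P]
    by (simp add: qnorm2_split_state[OF finite_W, where S = "Al k"])
qed

end

lemma realizes_with_margin_if_cross_sums:
  fixes PX :: "'a \<Rightarrow> 'i \<Rightarrow> qop" and PY :: "'b \<Rightarrow> 'i \<Rightarrow> qop"
  assumes fin: "finite W" "finite I" and \<Psi>: "qnorm2 W \<Psi> = 1" and card: "real (card I * card I) \<le> K"
    and PX: "\<And>x t. x \<in> X \<Longrightarrow> t \<in> I \<Longrightarrow> contraction W (PX x t)"
    and PY: "\<And>y t. y \<in> Y \<Longrightarrow> t \<in> I \<Longrightarrow> contraction W (PY y t)"
    and accept: "\<And>x y. x \<in> X \<Longrightarrow> y \<in> Y \<Longrightarrow> f x y \<Longrightarrow> 2/3 \<le> (\<Sum>t\<in>I. \<Sum>t'\<in>I.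
      Re (qinner W (cross_vec W (PY y) \<Psi> t' t) (cross_vec W (PX x) \<Psi> t t')))"
    and reject: "\<And>x y. x \<in> X \<Longrightarrow> y \<in> Y \<Longrightarrow> \<not> f x y \<Longrightarrow> (\<Sum>t\<in>I. \<Sum>t'\<in>I.
      Re (qinner W (cross_vec W (PY y) \<Psi> t' t) (cross_vec W (PX x) \<Psi> t t'))) \<le> 1/3"
  shows "realizes_with_margin X Y f (1 / (6 * K + 3))"
proof -
  have sum_J: "(\<Sum>q\<in>(I \<times> I) \<times> Pow W. F (fst (fst q)) (snd (fst q)) (snd q))
      = (\<Sum>t\<in>I. \<Sum>t'\<in>I. \<Sum>A\<in>Pow W. F t t' A)" for F :: "_ \<Rightarrow> _ \<Rightarrow> _ \<Rightarrow> real"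
    by (simp add: sum.cartesian_product')
  have norm: "(\<Sum>t\<in>I. \<Sum>t'\<in>I. qnorm2 W (cross_vec W Z \<Psi> t t')) \<le> K"
    if "\<And>t. t \<in> I \<Longrightarrow> contraction W (Z t)" for Z :: "'i \<Rightarrow> qop"
    using sum_qnorm2_cross_vec_le[OF fin(1) \<Psi>, of I Z] that card by fastforce
  show ?thesis
  proof (rule realizes_with_margin_if_bounded_cinner[where J = "(I \<times> I) \<times> Pow W"
        and u = "\<lambda>x q. cross_vec W (PX x) \<Psi> (fst (fst q)) (snd (fst q)) (snd q)"
        and v = "\<lambda>y q. cross_vec W (PY y) \<Psi> (snd (fst q)) (fst (fst q)) (snd q)"])
    show "finite ((I \<times> I) \<times> Pow W)" using fin by simp
    show "0 \<le> K" using card of_nat_0_le_iff order.trans by blast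
  next
    fix x assume "x \<in> X"
    then show "(\<Sum>q\<in>(I \<times> I) \<times> Pow W.
        (cmod (cross_vec W (PX x) \<Psi> (fst (fst q)) (snd (fst q)) (snd q)))\<^sup>2) \<le> K"
      using norm[of "PX x"] PX
      by (simp add: sum_J[of "\<lambda>t t' A. (cmod (cross_vec W (PX x) \<Psi> t t' A))\<^sup>2"] qnorm2_def)
  next
    fix y assume "y \<in> Y"
    have "(\<Sum>q\<in>(I \<times> I) \<times> Pow W. (cmod (cross_vec W (PY y) \<Psi> (snd (fst q)) (fst (fst q)) (snd q)))\<^sup>2)
        = (\<Sum>t\<in>I. \<Sum>t'\<in>I. qnorm2 W (cross_vec W (PY y) \<Psi> t' t))"
      by (simp add: sum_J[of "\<lambda>t t' A. (cmod (cross_vec W (PY y) \<Psi> t' t A))\<^sup>2"] qnorm2_def)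
    also have "\<dots> = (\<Sum>t\<in>I. \<Sum>t'\<in>I. qnorm2 W (cross_vec W (PY y) \<Psi> t t'))"
      by (rule sum.swap)
    also have "\<dots> \<le> K"
      using PY \<open>y \<in> Y\<close> by (intro norm) auto
    finally show "(\<Sum>q\<in>(I \<times> I) \<times> Pow W.
        (cmod (cross_vec W (PY y) \<Psi> (snd (fst q)) (fst (fst q)) (snd q)))\<^sup>2) \<le> K" .
  next
    fix x y assume xy: "x \<in> X" "y \<in> Y"
    have "(\<Sum>q\<in>(I \<times> I) \<times> Pow W. Re (cnj (cross_vec W (PY y) \<Psi> (snd (fst q)) (fst (fst q)) (snd q))
          * cross_vec W (PX x) \<Psi> (fst (fst q)) (snd (fst q)) (snd q)))
        = (\<Sum>t\<in>I. \<Sum>t'\<in>I. Re (qinner W (cross_vec W (PY y) \<Psi> t' t) (cross_vec W (PX x) \<Psi> t t')))"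
      unfolding sum_J[of "\<lambda>t t' A.
        Re (cnj (cross_vec W (PY y) \<Psi> t' t A) * cross_vec W (PX x) \<Psi> t t' A)"]
      by (simp add: qinner_def Re_sum)
    then show "f x y \<Longrightarrow> 2/3 \<le> (\<Sum>q\<in>(I \<times> I) \<times> Pow W.
          Re (cnj (cross_vec W (PY y) \<Psi> (snd (fst q)) (fst (fst q)) (snd q))
            * cross_vec W (PX x) \<Psi> (fst (fst q)) (snd (fst q)) (snd q)))"
      and "\<not> f x y \<Longrightarrow> (\<Sum>q\<in>(I \<times> I) \<times> Pow W.
          Re (cnj (cross_vec W (PY y) \<Psi> (snd (fst q)) (fst (fst q)) (snd q))
            * cross_vec W (PX x) \<Psi> (fst (fst q)) (snd (fst q)) (snd q))) \<le> 1/3"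
      using accept[OF xy] reject[OF xy] by simp_all
  qed
qed

lemma protocol_run_if_qprotocol:
  assumes "qprotocol X Y f N k \<psi> A0 s T UA UB p PA PB" "x \<in> X" "y \<in> Y"
  shows "protocol_run {..<N} k s T (alice_qubits A0 s T)
    (\<lambda>j. set_op N (UA j x)) (\<lambda>j. set_op N (UB j y))"
proof
  have rounds: "\<And>j. j < k \<Longrightarrow> (if s j
      then T j \<subseteq> alice_qubits A0 s T j \<and> is_unitary (2^N) (UA j x)
        \<and> local_op N (alice_qubits A0 s T j) (UA j x)
      else T j \<subseteq> {..<N} - alice_qubits A0 s T j \<and> is_unitary (2^N) (UB j y)
        \<and> local_op N ({..<N} - alice_qubits A0 s T j) (UB j y))"
    using assms unfolding qprotocol_def Let_def by (auto split: if_splits)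
  fix j
  show "j < k \<Longrightarrow> T j \<subseteq> (if s j then alice_qubits A0 s T j else {..<N} - alice_qubits A0 s T j)"
    using rounds[of j] by (auto split: if_splits)
  show "j < k \<Longrightarrow> s j \<Longrightarrow> contraction {..<N} (set_op N (UA j x))
      \<and> acts_on {..<N} (alice_qubits A0 s T j) (set_op N (UA j x))"
    using rounds[of j] by (simp add: contraction_set_op_if_unitary acts_on_set_op_if_local_op)
  show "j < k \<Longrightarrow> \<not> s j \<Longrightarrow> contraction {..<N} (set_op N (UB j y))
      \<and> acts_on {..<N} ({..<N} - alice_qubits A0 s T j) (set_op N (UB j y))"
    using rounds[of j] by (simp add: contraction_set_op_if_unitary acts_on_set_op_if_local_op)
qed (use assms in \<open>simp_all add: qprotocol_def Let_def\<close>)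

definition alice_final_op ::
    "nat \<Rightarrow> (nat \<Rightarrow> bool) \<Rightarrow> (nat \<Rightarrow> nat set) \<Rightarrow> (nat \<Rightarrow> 'a \<Rightarrow> nat \<Rightarrow> nat \<Rightarrow> complex) \<Rightarrow> nat
      \<Rightarrow> bool \<Rightarrow> ('a \<Rightarrow> nat \<Rightarrow> nat \<Rightarrow> complex) \<Rightarrow> 'a \<Rightarrow> (nat set \<times> nat set) list \<Rightarrow> qop" where
  "alice_final_op N s T UA k p PA x =
    measured_op {..<N} p (set_op N (PA x)) (party_op {..<N} s T (\<lambda>j. set_op N (UA j x)) k)"

definition bob_final_op ::
    "nat \<Rightarrow> (nat \<Rightarrow> bool) \<Rightarrow> (nat \<Rightarrow> nat set) \<Rightarrow> (nat \<Rightarrow> 'b \<Rightarrow> nat \<Rightarrow> nat \<Rightarrow> complex) \<Rightarrow> nat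
      \<Rightarrow> bool \<Rightarrow> ('b \<Rightarrow> nat \<Rightarrow> nat \<Rightarrow> complex) \<Rightarrow> 'b \<Rightarrow> (nat set \<times> nat set) list \<Rightarrow> qop" where
  "bob_final_op N s T UB k p PB y =
    measured_op {..<N} (\<not> p) (set_op N (PB y))
      (party_op {..<N} (\<lambda>j. \<not> s j) T (\<lambda>j. set_op N (UB j y)) k)"

lemma qprotocol_measurement:
  assumes "qprotocol X Y f N k \<psi> A0 s T UA UB p PA PB" "x \<in> X" "y \<in> Y"
  shows "contraction {..<N} (set_op N (if p then PA x else PB y))"
    and "if p then acts_on {..<N} (alice_qubits A0 s T k) (set_op N (if p then PA x else PB y))
      else acts_on {..<N} ({..<N} - alice_qubits A0 s T k) (set_op N (if p then PA x else PB y))"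
    and "alice_final_op N s T UA k p PA x
      = measured_op {..<N} p (set_op N (if p then PA x else PB y))
        (party_op {..<N} s T (\<lambda>j. set_op N (UA j x)) k)"
    and "bob_final_op N s T UB k p PB y
      = measured_op {..<N} (\<not> p) (set_op N (if p then PA x else PB y))
        (party_op {..<N} (\<lambda>j. \<not> s j) T (\<lambda>j. set_op N (UB j y)) k)"
  using assms unfolding qprotocol_def Let_def alice_final_op_def bob_final_op_def measured_op_def
  by (auto simp: contraction_set_op_if_projector acts_on_set_op_if_local_op)

lemma qprotocol_final_op_contraction:
  assumes "qprotocol X Y f N k \<psi> A0 s T UA UB p PA PB" "x \<in> X" "y \<in> Y" "t \<in> transcripts T k"
  shows "contraction {..<N} (alice_final_op N s T UA k p PA x t)"
    and "contraction {..<N} (bob_final_op N s T UB k p PB y t)"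
  using protocol_run.measured_op_local_contraction[OF protocol_run_if_qprotocol[OF assms(1-3)]
      qprotocol_measurement(1,2)[OF assms(1-3)] assms(4)]
  by (simp_all add: qprotocol_measurement(3,4)[OF assms(1-3)])

lemma qprotocol_acceptance:
  assumes qp: "qprotocol X Y f N k \<psi> A0 s T UA UB p PA PB" and xy: "x \<in> X" "y \<in> Y"
  shows "sqnorm (2^N) (apply_op (2^N) (if p then PA x else PB y)
      (run_state (2^N) \<psi> (\<lambda>j. if s j then UA j x else UB j y) k))
    = (\<Sum>t\<in>transcripts T k. \<Sum>t'\<in>transcripts T k. Re (qinner {..<N}
        (cross_vec {..<N} (bob_final_op N s T UB k p PB y) (set_vec N \<psi>) t' t)
        (cross_vec {..<N} (alice_final_op N s T UA k p PA x) (set_vec N \<psi>) t t')))"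
proof -
  interpret protocol_run "{..<N}" k s T "alice_qubits A0 s T" "\<lambda>j. set_op N (UA j x)"
      "\<lambda>j. set_op N (UB j y)"
    using protocol_run_if_qprotocol[OF qp xy] .
  define V where "V j = set_vec N (run_state (2^N) \<psi> (\<lambda>j. if s j then UA j x else UB j y) j)" for j
  have "\<And>A. \<not> A \<subseteq> {..<N} \<Longrightarrow> set_vec N \<psi> A = 0"
    by (simp add: set_vec_def)
  moreover have "V 0 = set_vec N \<psi>"
    "j < k \<Longrightarrow> V (Suc j) = qapply {..<N} (if s j then set_op N (UA j x) else set_op N (UB j y)) (V j)"
    for j by (simp_all add: V_def set_vec_apply_op if_distrib)
  ultimately show ?thesis
    using qnorm2_measured_run[where V = V, OF _ _ _ qprotocol_measurement(1,2)[OF qp xy]]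
    by (simp add: qprotocol_measurement(3,4)[OF qp xy] V_def sqnorm_eq_qnorm2 set_vec_apply_op)
qed

lemma qprotocol_realizes_with_margin:
  assumes qp: "qprotocol X Y f N k \<psi> A0 s T UA UB p PA PB" and "x0 \<in> X" "y0 \<in> Y"
  shows "realizes_with_margin X Y f (1 / (6 * 16 ^ qprotocol_cost k T + 3))"
proof (rule realizes_with_margin_if_cross_sums[where W = "{..<N}" and I = "transcripts T k"
      and \<Psi> = "set_vec N \<psi>" and PX = "alice_final_op N s T UA k p PA"
      and PY = "bob_final_op N s T UB k p PB"])
  interpret protocol_run "{..<N}" k s T "alice_qubits A0 s T" "\<lambda>j. set_op N (UA j x0)"
      "\<lambda>j. set_op N (UB j y0)"
    using protocol_run_if_qprotocol[OF qp assms(2,3)] .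
  show "finite (transcripts T k)" by (rule finite_transcripts_run)
  show "real (card (transcripts T k) * card (transcripts T k)) \<le> 16 ^ qprotocol_cost k T"
    using card_transcripts_run_squared by (simp add: qprotocol_cost_def)
  show "qnorm2 {..<N} (set_vec N \<psi>) = 1"
    using qp by (simp add: qprotocol_def Let_def sqnorm_eq_qnorm2)
next
  fix x y assume xy: "x \<in> X" "y \<in> Y"
  then show "f x y \<Longrightarrow> 2/3 \<le> (\<Sum>t\<in>transcripts T k. \<Sum>t'\<in>transcripts T k. Re (qinner {..<N}
        (cross_vec {..<N} (bob_final_op N s T UB k p PB y) (set_vec N \<psi>) t' t)
        (cross_vec {..<N} (alice_final_op N s T UA k p PA x) (set_vec N \<psi>) t t')))"
    and "\<not> f x y \<Longrightarrow> (\<Sum>t\<in>transcripts T k. \<Sum>t'\<in>transcripts T k. Re (qinner {..<N}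
        (cross_vec {..<N} (bob_final_op N s T UB k p PB y) (set_vec N \<psi>) t' t)
        (cross_vec {..<N} (alice_final_op N s T UA k p PA x) (set_vec N \<psi>) t t'))) \<le> 1/3"
    using qp unfolding qprotocol_acceptance[OF qp xy, symmetric] qprotocol_def Let_def by auto
qed (use qprotocol_final_op_contraction[OF qp] assms in auto)

lemma is_unitary_permutation:
  assumes "\<And>a. a < D \<Longrightarrow> \<pi> a < D" "inj \<pi>"
  shows "is_unitary D (\<lambda>a b. if b = \<pi> a then 1 else 0)"
  unfolding is_unitary_def
proof (intro allI impI)
  fix a c assume "a < D" "c < D"
  then have "(\<Sum>b<D. (if b = \<pi> a then 1 else 0) * cnj (if b = \<pi> c then 1 else 0))
      = (if \<pi> a = \<pi> c then 1 else (0::complex))"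
    using assms(1) by (simp add: if_distrib[of "\<lambda>z. z * _"] cong: if_cong)
  then show "(\<Sum>b<D. (if b = \<pi> a then 1 else 0) * cnj (if b = \<pi> c then 1 else 0))
      = (if a = c then 1 else 0)"
    using assms(2) by (simp add: inj_eq)
qed

lemma is_projector_diagonal: "is_projector D (\<lambda>a b. if a = b \<and> P a then 1 else 0)"
proof -
  have "(\<Sum>b<D. (if a = b \<and> P a then 1 else 0) * (if b = c \<and> P b then 1 else 0))
      = (\<Sum>b<D. if b = a then (if a = c \<and> P a then 1 else 0) else (0::complex))" for a c
    by (intro sum.cong) auto
  then show ?thesis unfolding is_projector_def by simp
qed

lemma local_op_everything: "local_op N {..<N} M"
  unfolding local_op_def
proof (intro exI[of _ "\<lambda>P Q. M (bit_index N {i. i < N \<and> P i}) (bit_index N {i. i < N \<and> Q i})"]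
    allI impI)
  fix a b :: nat assume "a < 2^N" "b < 2^N"
  moreover have "{i. i < N \<and> i \<in> {..<N} \<and> bit c i} = bit_set N c" for c
    by (auto simp: bit_set_def)
  ultimately show "M a b = (if \<forall>i<N. i \<notin> {..<N} \<longrightarrow> bit a i = bit b i
      then M (bit_index N {i. i < N \<and> i \<in> {..<N} \<and> bit a i})
        (bit_index N {i. i < N \<and> i \<in> {..<N} \<and> bit b i})
      else 0)"
    by (simp add: bit_index_bit_set)
qed

definition list_index :: "nat \<Rightarrow> bool list \<Rightarrow> nat" where
  "list_index n x = bit_index n {i. i < n \<and> x ! i}"

definition index_list :: "nat \<Rightarrow> nat \<Rightarrow> bool list" where
  "index_list n a = map (bit a) [0..<n]"

lemma list_index_less: "list_index n x < 2^n"
  unfolding list_index_def by (rule bit_index_less) auto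

lemma index_list_list_index:
  assumes "length x = n"
  shows "index_list n (list_index n x) = x"
proof -
  have "{i. i < n \<and> x ! i} \<subseteq> {..<n}" by auto
  then have "index_list n (list_index n x) = map (\<lambda>i. x ! i) [0..<length x]"
    unfolding index_list_def list_index_def using assms by (auto simp: bit_bit_index)
  then show ?thesis by (simp add: map_nth)
qed

text \<open>Alice moves the all-zero state to the basis state of her input and sends all n qubits;
  Bob measures whether f is true on the received input and his own.  Some protocol must exist
  for the LEAST in the definition of Qent to be attained.\<close>
lemma qprotocol_exists:
  fixes f :: "bool list \<Rightarrow> bool list \<Rightarrow> bool"
  shows "\<exists>N k \<psi> A0 s T UA UB p PA PB.
    qprotocol {xs. length xs = n} {ys. length ys = n} f N k \<psi> A0 s T UA UB p PA PB"
proof -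
  define \<psi> :: "nat \<Rightarrow> complex" where "\<psi> a = (if a = 0 then 1 else 0)" for a
  define UA where
    "UA j x a b = (if b = Transposition.transpose 0 (list_index n x) a then 1 else (0::complex))"
    for j :: nat and x a b
  define PB where "PB y a b = (if a = b \<and> f (index_list n a) y then 1 else (0::complex))" for y a b
  have unitary: "is_unitary (2^n) (UA 0 x)" for x
    unfolding UA_def
  proof (rule is_unitary_permutation[OF _ inj_transpose])
    show "Transposition.transpose 0 (list_index n x) a < 2^n" if "a < 2^n" for a
      using that list_index_less[of n x] by (simp add: Transposition.transpose_def)
  qed
  have state: "apply_op (2^n) (UA 0 x) \<psi> = (\<lambda>a. if a = list_index n x then 1 else 0)" for x
    using list_index_less[of n x]
    by (auto simp: apply_op_def UA_def \<psi>_def transpose_eq_iff if_distrib[of "\<lambda>z. z * _"]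
        cong: if_cong)
  have measured: "sqnorm (2^n) (apply_op (2^n) (PB y) (\<lambda>a. if a = list_index n x then 1 else 0))
      = (if f x y then 1 else 0)" if "length x = n" for x y
  proof -
    have "apply_op (2^n) (PB y) (\<lambda>a. if a = list_index n x then 1 else 0)
        = (\<lambda>a. if a = list_index n x \<and> f x y then 1 else 0)"
    proof
      fix a
      have "apply_op (2^n) (PB y) (\<lambda>a. if a = list_index n x then 1 else 0) a
          = (\<Sum>b<2^n. if b = a
              then (if a = list_index n x \<and> f (index_list n a) y then 1 else 0) else 0)"
        unfolding apply_op_def PB_def by (intro sum.cong) auto
      then show "apply_op (2^n) (PB y) (\<lambda>a. if a = list_index n x then 1 else 0) a
          = (if a = list_index n x \<and> f x y then 1 else 0)"
        using list_index_less[of n x] index_list_list_index[OF that] by auto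
    qed
    moreover have "sqnorm (2^n) (\<lambda>a. if a = list_index n x \<and> f x y then 1 else 0)
        = (\<Sum>a<2^n. if a = list_index n x then (if f x y then 1 else 0) else 0)"
      unfolding sqnorm_def by (intro sum.cong) auto
    ultimately show ?thesis using list_index_less[of n x] by simp
  qed
  have "qprotocol {xs. length xs = n} {ys. length ys = n} f n 1 \<psi> {..<n} (\<lambda>_. True) (\<lambda>_. {..<n})
    UA (\<lambda>_ _ _ _. 0) False (\<lambda>_ _ _. 0) PB"
  proof -
    have "sqnorm (2^n) \<psi> = (\<Sum>a<(2::nat)^n. if a = 0 then 1 else (0::real))"
      unfolding sqnorm_def \<psi>_def by (intro sum.cong) auto
    then have "sqnorm (2^n) \<psi> = 1" by simp
    moreover have "is_projector (2^n) (PB y)" for y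
      unfolding PB_def by (rule is_projector_diagonal)
    ultimately show ?thesis
      using unitary state measured by (simp add: qprotocol_def Let_def local_op_everything)
  qed
  then show ?thesis by blast
qed

lemma margin_gamma_ge_Qent:
  assumes "x \<in> X" "y \<in> Y"
    and "\<exists>N k \<psi> A0 s T UA UB p PA PB. qprotocol X Y f N k \<psi> A0 s T UA UB p PA PB"
  shows "1 / (6 * 16 ^ Qent X Y f + 3) \<le> margin_gamma X Y f"
proof -
  have "\<exists>N k \<psi> A0 s T UA UB p PA PB. qprotocol X Y f N k \<psi> A0 s T UA UB p PA PB
      \<and> qprotocol_cost k T = Qent X Y f"
    unfolding Qent_def by (rule LeastI_ex) (use assms(3) in blast)
  then obtain N k \<psi> A0 s T UA UB p PA PB where "qprotocol X Y f N k \<psi> A0 s T UA UB p PA PB"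
    and "qprotocol_cost k T = Qent X Y f"
    by blast
  then have "realizes_with_margin X Y f (1 / (6 * 16 ^ Qent X Y f + 3))"
    using qprotocol_realizes_with_margin assms(1,2) by metis
  then show ?thesis by (rule margin_gamma_ge[OF assms(1,2)])
qed

lemma log_margin_bound: "log 2 (6 * 16 ^ c + 3) \<le> 4 * real c + 4"
proof -
  have "(1::real) \<le> 16 ^ c" by simp
  then have "6 * 16 ^ c + 3 \<le> (16::real) * 16 ^ c" by linarith
  also have "\<dots> = 2 ^ (4 * c + 4)" by (simp add: power_add power_mult)
  finally have "log 2 (6 * 16 ^ c + 3) \<le> log 2 (2 ^ (4 * c + 4))"
    by (intro log_mono) (simp_all add: add_pos_pos)
  then show ?thesis by simp
qed

theorem mainTheorem8:
  shows "\<exists>C::real. \<forall>(n::nat) (f :: bool list \<Rightarrow> bool list \<Rightarrow> bool).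
           real (Qent {xs. length xs = n} {ys. length ys = n} f)
             \<ge> 1/4 * log 2 (1 / margin_gamma {xs. length xs = n} {ys. length ys = n} f) - C"
proof (intro exI[of _ 1] allI)
  fix n and f :: "bool list \<Rightarrow> bool list \<Rightarrow> bool"
  let ?X = "{xs :: bool list. length xs = n}"
  let ?Q = "Qent ?X ?X f"
  have X: "replicate n True \<in> ?X" by simp
  have gamma: "1 / (6 * 16 ^ ?Q + 3) \<le> margin_gamma ?X ?X f"
    using margin_gamma_ge_Qent[OF X X qprotocol_exists] .
  have pos: "0 < 1 / (6 * 16 ^ ?Q + 3 :: real)" by (simp add: add_pos_pos)
  have "1 / margin_gamma ?X ?X f \<le> 6 * 16 ^ ?Q + 3"
    using le_imp_inverse_le[OF gamma pos] by (simp add: inverse_eq_divide)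
  then have "log 2 (1 / margin_gamma ?X ?X f) \<le> log 2 (6 * 16 ^ ?Q + 3)"
    using order.strict_trans2[OF pos gamma] by (intro log_mono) simp_all
  also have "\<dots> \<le> 4 * real ?Q + 4" by (rule log_margin_bound)
  finally show "1/4 * log 2 (1 / margin_gamma ?X ?X f) - 1 \<le> real ?Q" by simp
qed

end
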